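(* Let $\mathbf{A}\in\mathbb{R}^{m\times n}$ and run Algorithm 2 (described in the context) on $\mathbf{A}$. Consider any iteration of its loop at whose start the current shift $\alpha$ is positive, and let $\mathbf{Q}\in\mathbb{R}^{m\times l}$ (with orthonormal columns) and $\alpha>0$ be the current quantities at the start of that iteration, i.e. just before the SVD of $\mathbf{A}\mathbf{A}^{\mathrm{T}}\mathbf{Q}-\alpha\mathbf{Q}$ is computed. Then for every $i\le l$, $$\sigma_i(\mathbf{Q}^{\mathrm{T}}\mathbf{A})\le\sqrt{\sigma_i(\mathbf{A}\mathbf{A}^{\mathrm{T}}\mathbf{Q}-\alpha\mathbf{Q})+\alpha}\le\sigma_i(\mathbf{A}).$$
   Context: $\sigma_i(\cdot)$ denotes the $i$-th largest singular value. Algorithm 2 (exact arithmetic), with input $\mathbf{A}\in\mathbb{R}^{m\times n}$ and integers $k,s,p$: set $l=k+s$, let $\mathbf{\Omega}\in\mathbb{R}^{n\times l}$ have i.i.d. standard Gaussian entries, set $\mathbf{Q}=\mathrm{orth}(\mathbf{A}\mathbf{\Omega})$ (an $m\times l$ matrix with orthonormal columns spanning the column space of $\mathbf{A}\mathbf{\Omega}$) and $\alpha=0$; then for $j=1,\dots,p$: compute the economic SVD $\mathbf{A}\mathbf{A}^{\mathrm{T}}\mathbf{Q}-\alpha\mathbf{Q}=\mathbf{Q}'\hat{\mathbf{S}}\mathbf{W}^{\mathrm{T}}$ (singular values in decreasing order on the diagonal of $\hat{\mathbf{S}}$), replace $\mathbf{Q}$ by $\mathbf{Q}'$, and if $\hat{\mathbf{S}}(l,l)>\alpha$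 replace $\alpha$ by $(\hat{\mathbf{S}}(l,l)+\alpha)/2$. *)

theory Defs
  imports "Jordan_Normal_Form.Matrix" "Jordan_Normal_Form.Char_Poly"
          "HOL-Computational_Algebra.Polynomial" "HOL-Library.Multiset"
begin

definition sing_vals :: "real mat \<Rightarrow> real list" where
  "sing_vals M = rev (sorted_list_of_multiset
      (image_mset sqrt (proots (char_poly (transpose_mat M * M)))))"

text \<open>sigma M i is the i-th largest singular value (1-based); 0 beyond the list.\<close>
definition sigma :: "real mat \<Rightarrow> nat \<Rightarrow> real" where
  "sigma M i = (if 1 \<le> i \<and> i \<le> length (sing_vals M) then sing_vals M ! (i - 1) else 0)"

definition col_space :: "real mat \<Rightarrow> real vec set" where
  "col_space M = {mult_mat_vec M x | x. x \<in> carrier_vec (dim_col M)}"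

definition orthonormal_cols :: "real mat \<Rightarrow> nat \<Rightarrow> nat \<Rightarrow> bool" where
  "orthonormal_cols Q m l \<longleftrightarrow> Q \<in> carrier_mat m l \<and> transpose_mat Q * Q = 1\<^sub>m l"

definition econ_svd :: "real mat \<Rightarrow> real mat \<Rightarrow> real mat \<Rightarrow> real mat \<Rightarrow> nat \<Rightarrow> nat \<Rightarrow> bool" where
  "econ_svd B Q' S W m l \<longleftrightarrow>
     orthonormal_cols Q' m l \<and> orthonormal_cols W l l \<and>
     S \<in> carrier_mat l l \<and> diagonal_mat S \<and>
     (\<forall>i<l. 0 \<le> S $$ (i, i)) \<and>
     (\<forall>i j. i \<le> j \<longrightarrow> j < l \<longrightarrow> S $$ (j, j) \<le> S $$ (i, i)) \<and>
     B = Q' * S * transpose_mat W"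

definition alg2_step :: "real mat \<Rightarrow> nat \<Rightarrow> nat \<Rightarrow> real mat \<Rightarrow> real \<Rightarrow> real mat \<Rightarrow> real \<Rightarrow> bool" where
  "alg2_step A m l Q \<alpha> Q' \<alpha>' \<longleftrightarrow>
     (\<exists>S W. econ_svd (A * transpose_mat A * Q - \<alpha> \<cdot>\<^sub>m Q) Q' S W m l \<and>
       \<alpha>' = (if S $$ (l - 1, l - 1) > \<alpha> then (S $$ (l - 1, l - 1) + \<alpha>) / 2 else \<alpha>))"

end

(*
  Write B = A A^T Q - alpha Q and let d_1 >= d_2 >= ... be the eigenvalues of A A^T, so that
  d_i = sigma_i(A)^2.  Both inequalities are Courant-Fischer estimates for singular values.

  Lower bound: with Y = A^T Q one has Q^T B = Y^T Y - alpha I, and Q^T does not increase norms.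
  On the span of the top i eigenvectors of Y^T Y the map Y^T Y - alpha I stretches by at least
  sigma_i(Y)^2 - alpha, and sigma_i(Y) = sigma_i(Q^T A).

  Upper bound: the image under Q of any i-dimensional subspace contains a nonzero w orthogonal to
  the top i - 1 eigenvectors of A A^T, and for it |(A A^T - alpha) w| <= max_{j>=i} |d_j - alpha| |w|,
  which is (d_i - alpha) |w| as long as 2 alpha <= d_i.  That 2 alpha <= d_l is an invariant of the
  algorithm: by the same estimate the smallest singular value of B is at most d_l - alpha, so the
  new shift (S(l,l) + alpha) / 2 stays below d_l / 2.
*)
theory Submission
  imports Defs "Jordan_Normal_Form.Spectral_Radius"
begin

section \<open>Inner products and isometries\<close>

lemma real_sprod_self_nonneg: "0 \<le> v \<bullet> (v :: real vec)"
  using conjugate_square_ge_0_vec[of v] by simp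

lemma real_sprod_self_pos:
  assumes "(v :: real vec) \<in> carrier_vec n" "v \<noteq> 0\<^sub>v n"
  shows "0 < v \<bullet> v"
  using conjugate_square_greater_0_vec[OF assms(1)] assms(2) by simp

lemma isometry_sprod:
  fixes Q :: "real mat"
  assumes Q: "Q \<in> carrier_mat m l" "transpose_mat Q * Q = 1\<^sub>m l"
    and p: "p \<in> carrier_vec l" and q: "q \<in> carrier_vec l"
  shows "(Q *\<^sub>v p) \<bullet> (Q *\<^sub>v q) = p \<bullet> q"
proof -
  have "(Q *\<^sub>v p) \<bullet> (Q *\<^sub>v q) = (transpose_mat Q *\<^sub>v (Q *\<^sub>v p)) \<bullet> q"
    using transpose_vec_mult_scalar[OF Q(1) q] Q p by simp
  also have "transpose_mat Q *\<^sub>v (Q *\<^sub>v p) = p"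
    using assoc_mult_mat_vec[of "transpose_mat Q" l m Q l p, symmetric] Q p by simp
  finally show ?thesis .
qed

lemma isometry_mult_vec_eq_0_iff:
  fixes Q :: "real mat"
  assumes Q: "Q \<in> carrier_mat m l" "transpose_mat Q * Q = 1\<^sub>m l" and p: "p \<in> carrier_vec l"
  shows "Q *\<^sub>v p = 0\<^sub>v m \<longleftrightarrow> p = 0\<^sub>v l"
  using isometry_sprod[OF Q p p] real_sprod_self_pos[OF p] Q by fastforce

lemma transpose_isometry_norm_le:
  fixes Q :: "real mat"
  assumes Q: "Q \<in> carrier_mat m l" "transpose_mat Q * Q = 1\<^sub>m l" and w: "w \<in> carrier_vec m"
  shows "(transpose_mat Q *\<^sub>v w) \<bullet> (transpose_mat Q *\<^sub>v w) \<le> w \<bullet> w"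
proof -
  define s where "s = transpose_mat Q *\<^sub>v w"
  define p where "p = Q *\<^sub>v s"
  have s: "s \<in> carrier_vec l" and p: "p \<in> carrier_vec m"
    unfolding s_def p_def using Q w by auto
  have wp: "w \<bullet> p = s \<bullet> s"
    using transpose_vec_mult_scalar[OF Q(1) s w] unfolding p_def s_def by simp
  have pp: "p \<bullet> p = s \<bullet> s"
    unfolding p_def using isometry_sprod[OF Q s s] .
  \<comment> \<open>p is the orthogonal projection of w onto the range of Q\<close>
  have "(w - p) \<bullet> (w - p) = w \<bullet> w - 2 * (w \<bullet> p) + p \<bullet> p"
    using w p by (simp add: scalar_prod_def power2_eq_square algebra_simps sum.distrib sum_subtractf sum_distrib_left)
  then show ?thesis
    using real_sprod_self_nonneg[of "w - p"] wp pp unfolding s_def by simp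
qed

lemma wide_mat_nontrivial_kernel:
  fixes P :: "'a :: field mat"
  assumes P: "P \<in> carrier_mat t k" and tk: "t < k"
  obtains y where "y \<in> carrier_vec k" "y \<noteq> 0\<^sub>v k" "P *\<^sub>v y = 0\<^sub>v t"
proof -
  \<comment> \<open>pad P with zero rows to a singular square matrix\<close>
  define P' where "P' = mat k k (\<lambda>(i,j). if i < t then P $$ (i,j) else 0)"
  have P': "P' \<in> carrier_mat k k" by (simp add: P'_def)
  have "P' = mat\<^sub>r k k (\<lambda>i. if i = k - 1 then 0\<^sub>v k else row P' i)"
    by (rule eq_matI) (use tk in \<open>auto simp: P'_def mat_of_rows_def row_def\<close>)
  moreover have "det (mat\<^sub>r k k (\<lambda>i. if i = k - 1 then 0\<^sub>v k else row P' i)) = 0"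
    by (rule det_row_0) (use tk P' in auto)
  ultimately obtain y where y: "y \<in> carrier_vec k" "y \<noteq> 0\<^sub>v k" "P' *\<^sub>v y = 0\<^sub>v k"
    using det_0_iff_vec_prod_zero_field[OF P'] by auto
  have "(P *\<^sub>v y) $ i = (P' *\<^sub>v y) $ i" if "i < t" for i
    using that tk P P' y(1) by (auto simp: mult_mat_vec_def scalar_prod_def P'_def intro: sum.cong)
  then have "P *\<^sub>v y = 0\<^sub>v t"
    using y(3) tk P by (intro eq_vecI) auto
  with y that show ?thesis by blast
qed

lemma injective_mat_dim_le:
  fixes V :: "'a :: field mat"
  assumes V: "V \<in> carrier_mat c i" and inj: "\<forall>y\<in>carrier_vec i. V *\<^sub>v y = 0\<^sub>v c \<longrightarrow> y = 0\<^sub>v i"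
  shows "i \<le> c"
  using wide_mat_nontrivial_kernel[OF V] inj by (metis not_le_imp_less)

lemma isometry_dim_le:
  fixes Q :: "real mat"
  assumes Q: "Q \<in> carrier_mat m l" "transpose_mat Q * Q = 1\<^sub>m l"
  shows "l \<le> m"
  using injective_mat_dim_le[OF Q(1)] isometry_mult_vec_eq_0_iff[OF Q] by blast

lemma injective_mat_range_meets_orthogonal_complement:
  fixes V :: "real mat" and u :: "nat \<Rightarrow> real vec"
  assumes V: "V \<in> carrier_mat c i" and inj: "\<forall>y\<in>carrier_vec i. V *\<^sub>v y = 0\<^sub>v c \<longrightarrow> y = 0\<^sub>v i"
    and u: "\<And>a. a < k \<Longrightarrow> u a \<in> carrier_vec c" and ki: "k < i"
  obtains y where "y \<in> carrier_vec i" "V *\<^sub>v y \<noteq> 0\<^sub>v c" "\<And>a. a < k \<Longrightarrow> u a \<bullet> (V *\<^sub>v y) = 0"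
proof -
  define U where "U = mat k c (\<lambda>(a,b). u a $ b)"
  have U: "U \<in> carrier_mat k c" unfolding U_def by simp
  obtain y where y: "y \<in> carrier_vec i" "y \<noteq> 0\<^sub>v i" and Uy: "(U * V) *\<^sub>v y = 0\<^sub>v k"
    using wide_mat_nontrivial_kernel[of "U * V" k i] U V ki by auto
  have "u a \<bullet> (V *\<^sub>v y) = 0" if a: "a < k" for a
  proof -
    have "row U a = u a"
      unfolding U_def using u[OF a] a by (auto intro!: eq_vecI)
    then have "u a \<bullet> (V *\<^sub>v y) = (U *\<^sub>v (V *\<^sub>v y)) $ a"
      using U a by simp
    also have "\<dots> = 0"
      using Uy a assoc_mult_mat_vec[OF U V y(1)] by simp
    finally show ?thesis .
  qed
  moreover have "V *\<^sub>v y \<noteq> 0\<^sub>v c"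
    using inj y by blast
  ultimately show ?thesis using that y(1) by blast
qed

section \<open>Orthonormal bases\<close>

definition orthonormal_basis :: "nat \<Rightarrow> (nat \<Rightarrow> real vec) \<Rightarrow> bool" where
  "orthonormal_basis n u \<longleftrightarrow> (\<forall>j<n. u j \<in> carrier_vec n) \<and>
     (\<forall>i<n. \<forall>j<n. u i \<bullet> u j = (if i = j then 1 else 0))"

definition basis_mat :: "nat \<Rightarrow> (nat \<Rightarrow> real vec) \<Rightarrow> real mat" where
  "basis_mat n u = mat n n (\<lambda>(i,j). u j $ i)"

lemma basis_mat_carrier[simp]: "basis_mat n u \<in> carrier_mat n n"
  and dim_basis_mat[simp]: "dim_row (basis_mat n u) = n" "dim_col (basis_mat n u) = n"
  unfolding basis_mat_def by simp_all

lemma unit_vec_orthonormal_basis_extend: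
  assumes u: "u \<in> carrier_vec n" "u \<bullet> u = 1"
  obtains w where "orthonormal_basis n w" "w 0 = u"
proof -
  interpret cof_vec_space n "TYPE(real)" .
  have u0: "u \<noteq> 0\<^sub>v n" using u by auto
  then have n: "0 < n" using u(1) by (metis carrier_vecD eq_vecI index_zero_vec(2) not_gr0 not_less0)
  define b where "b = basis_completion u"
  from basis_completion[OF u(1) u0, folded b_def]
  have b: "set b \<subseteq> carrier_vec n" "distinct b" "\<not> lin_dep (set b)" "length b = n" "hd b = u" by auto
  define ws where "ws = gram_schmidt n b"
  from gram_schmidt_result[OF b(1) b(2) b(3) ws_def]
  have ws: "corthogonal ws" "set ws \<subseteq> carrier_vec n" "length ws = n" using b(4) by auto
  obtain vs where "b = u # vs" using b(4) b(5) n by (cases b) auto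
  then have "hd ws = u" using gram_schmidt_hd[OF u(1), of vs] ws_def by simp
  then have hd: "ws ! 0 = u" using ws(3) n by (cases ws) auto
  have wsc: "ws ! j \<in> carrier_vec n" if "j < n" for j using ws that by auto
  have orth: "ws ! i \<bullet> ws ! j = 0 \<longleftrightarrow> i \<noteq> j" if "i < n" "j < n" for i j
    using corthogonalD[OF ws(1), of i j] that ws(3) by simp
  define w where "w j = (1 / sqrt (ws ! j \<bullet> ws ! j)) \<cdot>\<^sub>v ws ! j" for j
  have "w i \<bullet> w j = (if i = j then 1 else 0)" if i: "i < n" and j: "j < n" for i j
  proof -
    have "w i \<bullet> w j = (1 / sqrt (ws ! i \<bullet> ws ! i)) * (1 / sqrt (ws ! j \<bullet> ws ! j)) * (ws ! i \<bullet> ws ! j)"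
      unfolding w_def using wsc[OF i] wsc[OF j] by simp
    moreover have "ws ! i \<bullet> ws ! i > 0"
      using orth[OF i i] real_sprod_self_nonneg[of "ws ! i"] by linarith
    ultimately show ?thesis
      using orth[OF i j] by (auto simp: field_simps)
  qed
  moreover have "w j \<in> carrier_vec n" if "j < n" for j
    using wsc[OF that] unfolding w_def by simp
  ultimately have "orthonormal_basis n w"
    unfolding orthonormal_basis_def by blast
  moreover have "w 0 = u" unfolding w_def hd using u by simp
  ultimately show ?thesis using that by blast
qed

context
  fixes n :: nat and u :: "nat \<Rightarrow> real vec"
  assumes onb: "orthonormal_basis n u"
begin

lemma orthonormal_basis_carrier: "j < n \<Longrightarrow> u j \<in> carrier_vec n"
  using onb unfolding orthonormal_basis_def by auto

lemma orthonormal_basis_sprod: "i < n \<Longrightarrow> j < n \<Longrightarrow> u i \<bullet> u j = (if i = j then 1 else 0)"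
  using onb unfolding orthonormal_basis_def by auto

lemma col_basis_mat: "j < n \<Longrightarrow> col (basis_mat n u) j = u j"
  unfolding basis_mat_def using orthonormal_basis_carrier[of j] by (auto simp: col_mat intro!: eq_vecI)

lemma transpose_basis_mat_mult: "transpose_mat (basis_mat n u) * basis_mat n u = 1\<^sub>m n"
  by (rule eq_matI) (auto simp: row_transpose col_basis_mat orthonormal_basis_sprod)

lemma basis_mat_mult_transpose: "basis_mat n u * transpose_mat (basis_mat n u) = 1\<^sub>m n"
  using mat_mult_left_right_inverse[OF _ basis_mat_carrier transpose_basis_mat_mult] by auto

lemma transpose_basis_mat_mult_vec:
  "z \<in> carrier_vec n \<Longrightarrow> transpose_mat (basis_mat n u) *\<^sub>v z = vec n (\<lambda>j. u j \<bullet> z)"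
  by (rule eq_vecI) (auto simp: row_transpose col_basis_mat)

lemma basis_expansion:
  assumes z: "z \<in> carrier_vec n"
  shows "z = basis_mat n u *\<^sub>v vec n (\<lambda>j. u j \<bullet> z)"
  using assoc_mult_mat_vec[of "basis_mat n u" n n "transpose_mat (basis_mat n u)" n z]
  by (simp add: z basis_mat_mult_transpose flip: transpose_basis_mat_mult_vec[OF z])

lemma sprod_basis_mat_mult_vec:
  assumes p: "p \<in> carrier_vec n" and j: "j < n"
  shows "u j \<bullet> (basis_mat n u *\<^sub>v p) = p $ j"
proof -
  have "transpose_mat (basis_mat n u) *\<^sub>v (basis_mat n u *\<^sub>v p) = p"
    using assoc_mult_mat_vec[of "transpose_mat (basis_mat n u)" n n "basis_mat n u" n p, symmetric]
    by (simp add: p transpose_basis_mat_mult)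
  then show ?thesis
    using transpose_basis_mat_mult_vec[of "basis_mat n u *\<^sub>v p"] p j by (metis index_vec mult_mat_vec_carrier basis_mat_carrier)
qed

lemma parseval:
  assumes z: "z \<in> carrier_vec n"
  shows "z \<bullet> z = (\<Sum>j\<in>{0..<n}. (u j \<bullet> z)\<^sup>2)"
proof -
  have "z \<bullet> z = vec n (\<lambda>j. u j \<bullet> z) \<bullet> vec n (\<lambda>j. u j \<bullet> z)"
    using isometry_sprod[OF basis_mat_carrier transpose_basis_mat_mult,
        of "vec n (\<lambda>j. u j \<bullet> z)" "vec n (\<lambda>j. u j \<bullet> z)"]
      basis_expansion[OF z] by simp
  then show ?thesis by (simp add: scalar_prod_def power2_eq_square)
qed

lemma sum_weighted_coords_le:
  assumes z: "z \<in> carrier_vec n" and e: "\<And>j. j < n \<Longrightarrow> u j \<bullet> z \<noteq> 0 \<Longrightarrow> e j \<le> \<gamma>"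
  shows "(\<Sum>j\<in>{0..<n}. e j * (u j \<bullet> z)\<^sup>2) \<le> \<gamma> * (z \<bullet> z)"
  unfolding parseval[OF z] sum_distrib_left
  by (rule sum_mono) (use e in \<open>force intro: mult_right_mono\<close>)

lemma sum_weighted_coords_ge:
  assumes z: "z \<in> carrier_vec n" and e: "\<And>j. j < n \<Longrightarrow> u j \<bullet> z \<noteq> 0 \<Longrightarrow> \<gamma> \<le> e j"
  shows "\<gamma> * (z \<bullet> z) \<le> (\<Sum>j\<in>{0..<n}. e j * (u j \<bullet> z)\<^sup>2)"
  unfolding parseval[OF z] sum_distrib_left
  by (rule sum_mono) (use e in \<open>force intro: mult_right_mono\<close>)

lemma leading_basis_vectors_mat:
  assumes i: "i \<le> n"
  obtains V where "V \<in> carrier_mat n i" "\<forall>y\<in>carrier_vec i. V *\<^sub>v y = 0\<^sub>v n \<longrightarrow> y = 0\<^sub>v i"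
    "\<And>y j. y \<in> carrier_vec i \<Longrightarrow> j < n \<Longrightarrow> u j \<bullet> (V *\<^sub>v y) = (if j < i then y $ j else 0)"
proof -
  define E where "E = mat n i (\<lambda>(a,b). if a = b then (1::real) else 0)"
  define V where "V = basis_mat n u * E"
  have V: "V \<in> carrier_mat n i" unfolding V_def E_def by (auto intro: mult_carrier_mat)
  have Ey: "E *\<^sub>v y = vec n (\<lambda>a. if a < i then y $ a else 0)" if y: "y \<in> carrier_vec i" for y
    unfolding E_def
    by (rule eq_vecI) (use y in \<open>auto simp: scalar_prod_def row_def if_distrib[of "\<lambda>x. x * _"] cong: if_cong\<close>)
  have coords: "u j \<bullet> (V *\<^sub>v y) = (if j < i then y $ j else 0)" if y: "y \<in> carrier_vec i" and j: "j < n" for y j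
  proof -
    have "V *\<^sub>v y = basis_mat n u *\<^sub>v (E *\<^sub>v y)"
      unfolding V_def by (rule assoc_mult_mat_vec) (use y in \<open>auto simp: E_def\<close>)
    then show ?thesis
      using sprod_basis_mat_mult_vec[of "E *\<^sub>v y" j] Ey[OF y] j by simp
  qed
  have "y = 0\<^sub>v i" if y: "y \<in> carrier_vec i" and "V *\<^sub>v y = 0\<^sub>v n" for y
  proof (rule eq_vecI)
    fix j assume "j < dim_vec (0\<^sub>v i :: real vec)"
    then have j: "j < i" by simp
    then have "u j \<bullet> (V *\<^sub>v y) = 0"
      using \<open>V *\<^sub>v y = 0\<^sub>v n\<close> orthonormal_basis_carrier[of j] i by simp
    then show "y $ j = 0\<^sub>v i $ j" using coords[OF y, of j] j i by simp
  qed (use y in simp)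
  then show ?thesis using that V coords by blast
qed

end

section \<open>The spectral theorem for real symmetric matrices\<close>

lemma conjugate_of_real_mat_mult_vec:
  fixes M :: "real mat" and v :: "complex vec"
  assumes "M \<in> carrier_mat n n" "v \<in> carrier_vec n"
  shows "conjugate (map_mat complex_of_real M *\<^sub>v v) = map_mat complex_of_real M *\<^sub>v conjugate v"
  using assms by (intro eq_vecI) (auto simp: mult_mat_vec_def scalar_prod_def sum_conjugate)

lemma symmetric_real_mat_complex_eigenvalue_real:
  fixes M :: "real mat"
  assumes M: "M \<in> carrier_mat n n" and sym: "transpose_mat M = M"
    and ev: "eigenvalue (map_mat complex_of_real M) z"
  shows "cnj z = z"
proof -
  let ?Mc = "map_mat complex_of_real M"
  have Mc: "?Mc \<in> carrier_mat n n" and Mc_sym: "transpose_mat ?Mc = ?Mc"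
    using M sym by (auto simp: map_mat_transpose)
  obtain v where v: "v \<in> carrier_vec n" "v \<noteq> 0\<^sub>v n" and Mv: "?Mc *\<^sub>v v = z \<cdot>\<^sub>v v"
    using ev Mc unfolding eigenvalue_def eigenvector_def by auto
  have "z * (v \<bullet>c v) = (?Mc *\<^sub>v v) \<bullet>c v"
    using v by (simp add: Mv)
  also have "\<dots> = v \<bullet> (?Mc *\<^sub>v conjugate v)"
    using transpose_vec_mult_scalar[OF Mc, of "conjugate v" v] v Mc_sym by simp
  also have "\<dots> = cnj z * (v \<bullet>c v)"
    using v Mv by (simp add: conjugate_of_real_mat_mult_vec[OF M, symmetric] conjugate_smult_vec)
  finally show ?thesis
    using v by simp
qed

lemma symmetric_real_mat_has_eigenvalue:
  fixes M :: "real mat"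
  assumes M: "M \<in> carrier_mat n n" and n: "0 < n" and sym: "transpose_mat M = M"
  shows "\<exists>a. eigenvalue M a"
proof -
  let ?Mc = "map_mat complex_of_real M"
  have Mc: "?Mc \<in> carrier_mat n n" using M by simp
  obtain z where z: "eigenvalue ?Mc z"
    using spectrum_non_empty[OF Mc n] unfolding spectrum_def by auto
  then have "z = of_real (Re z)"
    using symmetric_real_mat_complex_eigenvalue_real[OF M sym] by (metis Reals_cnj_iff of_real_Re)
  then have "of_real (poly (char_poly M) (Re z)) = poly (char_poly ?Mc) z"
    by (metis of_real_hom.char_poly_hom[OF M] of_real_hom.poly_map_poly)
  also have "\<dots> = 0" using z eigenvalue_root_char_poly[OF Mc] by simp
  finally show ?thesis using eigenvalue_root_char_poly[OF M] by auto
qed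

lemma mult_vec_vCons_zero:
  fixes A :: "'a :: comm_semiring_0 mat"
  assumes A: "A \<in> carrier_mat (Suc n) (Suc n)" and row0: "\<And>j. j < n \<Longrightarrow> A $$ (0, Suc j) = 0"
    and z: "z \<in> carrier_vec n"
  shows "A *\<^sub>v vCons 0 z = vCons 0 (mat n n (\<lambda>(i,j). A $$ (Suc i, Suc j)) *\<^sub>v z)"
proof (rule eq_vecI)
  fix k assume "k < dim_vec (vCons 0 (mat n n (\<lambda>(i,j). A $$ (Suc i, Suc j)) *\<^sub>v z))"
  then have k: "k < Suc n" by simp
  have "(A *\<^sub>v vCons 0 z) $ k = (\<Sum>j\<in>{0..<Suc n}. A $$ (k, j) * vCons 0 z $ j)"
    using k A z by (simp add: mult_mat_vec_def scalar_prod_def del: sum.op_ivl_Suc)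
  also have "\<dots> = (\<Sum>j\<in>{0..<n}. A $$ (k, Suc j) * z $ j)"
    unfolding sum.atLeast0_lessThan_Suc_shift by simp
  also have "\<dots> = vCons 0 (mat n n (\<lambda>(i,j). A $$ (Suc i, Suc j)) *\<^sub>v z) $ k"
    using k z row0 by (cases k) (auto simp: mult_mat_vec_def scalar_prod_def)
  finally show "(A *\<^sub>v vCons 0 z) $ k = vCons 0 (mat n n (\<lambda>(i,j). A $$ (Suc i, Suc j)) *\<^sub>v z) $ k" .
qed (use A in simp)

lemma symmetric_mat_basis_change:
  fixes M :: "real mat"
  assumes M: "M \<in> carrier_mat n n" and sym: "transpose_mat M = M" and onb: "orthonormal_basis n w"
  defines "A \<equiv> transpose_mat (basis_mat n w) * M * basis_mat n w"
  shows "A \<in> carrier_mat n n" and "transpose_mat A = A"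
    and "\<And>i j. i < n \<Longrightarrow> j < n \<Longrightarrow> A $$ (i, j) = w i \<bullet> (M *\<^sub>v w j)"
    and "\<And>p. p \<in> carrier_vec n \<Longrightarrow> M *\<^sub>v (basis_mat n w *\<^sub>v p) = basis_mat n w *\<^sub>v (A *\<^sub>v p)"
proof -
  let ?W = "basis_mat n w"
  show A: "A \<in> carrier_mat n n" unfolding A_def using M by auto
  have A_assoc: "A = transpose_mat ?W * (M * ?W)"
    unfolding A_def using assoc_mult_mat[of "transpose_mat ?W" n n M n ?W n] M by simp
  have "transpose_mat (transpose_mat ?W * M) = transpose_mat M * ?W"
    using transpose_mult[of "transpose_mat ?W" n n M n] M by simp
  then have "transpose_mat A = transpose_mat ?W * (transpose_mat M * ?W)"
    unfolding A_def using transpose_mult[of "transpose_mat ?W * M" n n ?W n] M by simp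
  then show "transpose_mat A = A"
    unfolding A_assoc sym .
  show "A $$ (i, j) = w i \<bullet> (M *\<^sub>v w j)" if "i < n" "j < n" for i j
    unfolding A_assoc using that M col_mult2[of M n n ?W n j]
    by (simp add: row_transpose col_basis_mat[OF onb])
  have "?W * A = (?W * transpose_mat ?W) * (M * ?W)"
    unfolding A_assoc using M by (simp add: assoc_mult_mat[of ?W n n _ n _ n])
  then have WA: "?W * A = M * ?W" using basis_mat_mult_transpose[OF onb] M by simp
  show "M *\<^sub>v (?W *\<^sub>v p) = ?W *\<^sub>v (A *\<^sub>v p)" if p: "p \<in> carrier_vec n" for p
    using assoc_mult_mat_vec[of M n n ?W n p] assoc_mult_mat_vec[of ?W n n A n p] WA M A p by simp
qed

text \<open>M' is M restricted to the orthogonal complement of the unit eigenvector u0, written in an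
  orthonormal basis of that complement; L embeds R^n isometrically onto the complement.\<close>
lemma symmetric_deflation:
  fixes M :: "real mat"
  assumes M: "M \<in> carrier_mat (Suc n) (Suc n)" and sym: "transpose_mat M = M"
    and u0: "u0 \<in> carrier_vec (Suc n)" "u0 \<bullet> u0 = 1" and Mu0: "M *\<^sub>v u0 = a \<cdot>\<^sub>v u0"
  obtains M' L where "M' \<in> carrier_mat n n" "transpose_mat M' = M'"
    "\<And>z. L z \<in> carrier_vec (Suc n)"
    "\<And>z z'. z \<in> carrier_vec n \<Longrightarrow> z' \<in> carrier_vec n \<Longrightarrow> L z \<bullet> L z' = z \<bullet> z'"
    "\<And>z. z \<in> carrier_vec n \<Longrightarrow> u0 \<bullet> L z = 0"
    "\<And>z. z \<in> carrier_vec n \<Longrightarrow> M *\<^sub>v L z = L (M' *\<^sub>v z)"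
    "\<And>c z. z \<in> carrier_vec n \<Longrightarrow> L (c \<cdot>\<^sub>v z) = c \<cdot>\<^sub>v L z"
proof -
  obtain w where onb: "orthonormal_basis (Suc n) w" and w0: "w 0 = u0"
    using unit_vec_orthonormal_basis_extend[OF u0] by blast
  let ?W = "basis_mat (Suc n) w"
  define A where "A = transpose_mat ?W * M * ?W"
  note A = symmetric_mat_basis_change[OF M sym onb, folded A_def]
  define M' where "M' = mat n n (\<lambda>(i,j). A $$ (Suc i, Suc j))"
  have "A $$ (0, Suc j) = 0" if "j < n" for j
  proof -
    have "A $$ (0, Suc j) = A $$ (Suc j, 0)"
      using arg_cong[OF A(2), of "\<lambda>B. B $$ (Suc j, 0)"] A(1) that by simp
    also have "\<dots> = a * (w (Suc j) \<bullet> w 0)"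
      using A(3)[of "Suc j" 0] that Mu0 w0 u0(1) orthonormal_basis_carrier[OF onb, of "Suc j"] by simp
    finally show ?thesis using orthonormal_basis_sprod[OF onb, of "Suc j" 0] that by simp
  qed
  then have A_vCons: "A *\<^sub>v vCons 0 z = vCons 0 (M' *\<^sub>v z)" if "z \<in> carrier_vec n" for z
    unfolding M'_def using mult_vec_vCons_zero[OF A(1) _ that] by blast
  have M': "M' \<in> carrier_mat n n" unfolding M'_def by simp
  have "A $$ (Suc j, Suc i) = A $$ (Suc i, Suc j)" if "i < n" "j < n" for i j
    using arg_cong[OF A(2), of "\<lambda>B. B $$ (Suc i, Suc j)"] A(1) that by simp
  then have M'_sym: "transpose_mat M' = M'"
    unfolding M'_def by (intro eq_matI) auto
  define L where "L z = ?W *\<^sub>v vCons 0 z" for z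
  have vCons_carrier: "vCons 0 z \<in> carrier_vec (Suc n)" if "z \<in> carrier_vec n" for z :: "real vec"
    using that by simp
  show ?thesis
  proof (rule that[OF M' M'_sym])
    show "L z \<in> carrier_vec (Suc n)" for z
      unfolding L_def by (intro carrier_vecI) simp
    show "L z \<bullet> L z' = z \<bullet> z'" if "z \<in> carrier_vec n" "z' \<in> carrier_vec n" for z z'
      unfolding L_def using that isometry_sprod[OF basis_mat_carrier transpose_basis_mat_mult[OF onb]]
      by (simp add: scalar_prod_vCons)
    show "u0 \<bullet> L z = 0" if "z \<in> carrier_vec n" for z
      unfolding L_def using sprod_basis_mat_mult_vec[OF onb, of "vCons 0 z" 0] that w0 by simp
    show "M *\<^sub>v L z = L (M' *\<^sub>v z)" if "z \<in> carrier_vec n" for z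
      unfolding L_def using A(4)[OF vCons_carrier[OF that]] A_vCons[OF that] by simp
    show "L (c \<cdot>\<^sub>v z) = c \<cdot>\<^sub>v L z" if "z \<in> carrier_vec n" for c z
    proof -
      have "vCons 0 (c \<cdot>\<^sub>v z) = c \<cdot>\<^sub>v vCons 0 z"
        using that by (intro eq_vecI) (auto simp: vec_index_vCons)
      then have "L (c \<cdot>\<^sub>v z) = ?W *\<^sub>v (c \<cdot>\<^sub>v vCons 0 z)"
        unfolding L_def by (rule arg_cong)
      also have "\<dots> = c \<cdot>\<^sub>v L z"
        unfolding L_def by (rule mult_mat_vec[OF basis_mat_carrier vCons_carrier[OF that]])
      finally show ?thesis .
    qed
  qed
qed

definition sorted_eigenbasis :: "real mat \<Rightarrow> nat \<Rightarrow> (nat \<Rightarrow> real vec) \<Rightarrow> (nat \<Rightarrow> real) \<Rightarrow> bool" where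
  "sorted_eigenbasis M n u d \<longleftrightarrow> orthonormal_basis n u \<and> (\<forall>j<n. M *\<^sub>v u j = d j \<cdot>\<^sub>v u j) \<and>
     (\<forall>i j. i \<le> j \<longrightarrow> j < n \<longrightarrow> d j \<le> d i)"

lemma eigenvalue_unit_eigenvector:
  fixes M :: "real mat"
  assumes M: "M \<in> carrier_mat n n" and ev: "eigenvalue M a"
  obtains u where "u \<in> carrier_vec n" "u \<bullet> u = 1" "M *\<^sub>v u = a \<cdot>\<^sub>v u"
proof -
  obtain v where v: "v \<in> carrier_vec n" "v \<noteq> 0\<^sub>v n" "M *\<^sub>v v = a \<cdot>\<^sub>v v"
    using ev M unfolding eigenvalue_def eigenvector_def by auto
  define u where "u = (1 / sqrt (v \<bullet> v)) \<cdot>\<^sub>v v"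
  have "0 < v \<bullet> v" using real_sprod_self_pos[OF v(1,2)] .
  then have "u \<in> carrier_vec n" "u \<bullet> u = 1" "M *\<^sub>v u = a \<cdot>\<^sub>v u"
    unfolding u_def using v M by (auto simp: mult_mat_vec smult_smult_assoc mult.commute)
  then show ?thesis using that by blast
qed

lemma symmetric_mat_max_eigenvalue:
  fixes M :: "real mat"
  assumes M: "M \<in> carrier_mat n n" and n: "0 < n" and sym: "transpose_mat M = M"
  obtains a u where "u \<in> carrier_vec n" "u \<bullet> u = 1" "M *\<^sub>v u = a \<cdot>\<^sub>v u" "\<And>b. eigenvalue M b \<Longrightarrow> b \<le> a"
proof -
  define a where "a = Max (Collect (eigenvalue M))"
  have "finite (Collect (eigenvalue M))"
    using card_finite_spectrum[OF M] unfolding spectrum_def by blast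
  moreover have "Collect (eigenvalue M) \<noteq> {}"
    using symmetric_real_mat_has_eigenvalue[OF M n sym] by auto
  ultimately have "eigenvalue M a" and "\<And>b. eigenvalue M b \<Longrightarrow> b \<le> a"
    unfolding a_def using Max_in Max_ge by auto
  with eigenvalue_unit_eigenvector[OF M] that show ?thesis by metis
qed

lemma sorted_eigenbasis_if_head_max:
  fixes M :: "real mat"
  assumes M: "M \<in> carrier_mat n n" and onb: "orthonormal_basis n u"
    and eigen: "\<forall>j<n. M *\<^sub>v u j = d j \<cdot>\<^sub>v u j" and head: "\<And>b. eigenvalue M b \<Longrightarrow> b \<le> d 0"
    and tail: "\<And>i j. 0 < i \<Longrightarrow> i \<le> j \<Longrightarrow> j < n \<Longrightarrow> d j \<le> d i"
  shows "sorted_eigenbasis M n u d"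
proof -
  have "d j \<le> d 0" if "j < n" for j
  proof -
    have "u j \<noteq> 0\<^sub>v n"
      using orthonormal_basis_sprod[OF onb that that] by auto
    then have "eigenvector M (u j) (d j)"
      using eigen that orthonormal_basis_carrier[OF onb that] M unfolding eigenvector_def by auto
    then show ?thesis using head unfolding eigenvalue_def by blast
  qed
  then have "d j \<le> d i" if "i \<le> j" "j < n" for i j
    using that tail by (cases "i = 0") auto
  then show ?thesis
    unfolding sorted_eigenbasis_def using onb eigen by blast
qed

theorem symmetric_mat_sorted_eigenbasis:
  fixes M :: "real mat"
  assumes "M \<in> carrier_mat n n" "transpose_mat M = M"
  obtains u d where "sorted_eigenbasis M n u d"
proof -
  have "\<exists>u d. sorted_eigenbasis M n u d"
    using assms
  proof (induction n arbitrary: M)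
    case 0
    then show ?case by (auto simp: sorted_eigenbasis_def orthonormal_basis_def)
  next
    case (Suc n)
    note M = Suc.prems(1) and sym = Suc.prems(2)
    \<comment> \<open>deflate by the largest eigenvalue, so that sortedness is inherited from the smaller matrix\<close>
    obtain a u0 where u0: "u0 \<in> carrier_vec (Suc n)" "u0 \<bullet> u0 = 1" and Mu0: "M *\<^sub>v u0 = a \<cdot>\<^sub>v u0"
      and a_max: "\<And>b. eigenvalue M b \<Longrightarrow> b \<le> a"
      using symmetric_mat_max_eigenvalue[OF M _ sym] by blast
    obtain M' L where M': "M' \<in> carrier_mat n n" "transpose_mat M' = M'"
      and L_carrier: "\<And>z. L z \<in> carrier_vec (Suc n)"
      and L_sprod: "\<And>z z'. z \<in> carrier_vec n \<Longrightarrow> z' \<in> carrier_vec n \<Longrightarrow> L z \<bullet> L z' = z \<bullet> z'"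
      and L_orth: "\<And>z. z \<in> carrier_vec n \<Longrightarrow> u0 \<bullet> L z = 0"
      and L_mult: "\<And>z. z \<in> carrier_vec n \<Longrightarrow> M *\<^sub>v L z = L (M' *\<^sub>v z)"
      and L_smult: "\<And>c z. z \<in> carrier_vec n \<Longrightarrow> L (c \<cdot>\<^sub>v z) = c \<cdot>\<^sub>v L z"
      using symmetric_deflation[OF M sym u0 Mu0] by blast
    obtain u' d' where eb': "sorted_eigenbasis M' n u' d'"
      using Suc.IH[OF M'] by blast
    have u': "u' j \<in> carrier_vec n" if "j < n" for j
      using eb' that orthonormal_basis_carrier unfolding sorted_eigenbasis_def by blast
    define u where "u j = (if j = 0 then u0 else L (u' (j - 1)))" for j
    define d where "d j = (if j = 0 then a else d' (j - 1))" for j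
    have u_carrier: "u j \<in> carrier_vec (Suc n)" if "j < Suc n" for j
      using that u0 L_carrier u' unfolding u_def by auto
    have u_sprod: "u i \<bullet> u j = (if i = j then 1 else 0)" if "i < Suc n" "j < Suc n" for i j
      using that u0 L_orth L_sprod u' eb' comm_scalar_prod[OF u0(1) L_carrier]
        orthonormal_basis_sprod[of n u']
      unfolding u_def sorted_eigenbasis_def by (auto split: if_splits)
    have Mu: "M *\<^sub>v u j = d j \<cdot>\<^sub>v u j" if "j < Suc n" for j
      using that Mu0 L_mult L_smult u' eb' unfolding u_def d_def sorted_eigenbasis_def by auto
    have "sorted_eigenbasis M (Suc n) u d"
    proof (rule sorted_eigenbasis_if_head_max[OF M])
      show "orthonormal_basis (Suc n) u"
        unfolding orthonormal_basis_def using u_carrier u_sprod by blast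
      show "\<forall>j<Suc n. M *\<^sub>v u j = d j \<cdot>\<^sub>v u j" using Mu by blast
      show "\<And>b. eigenvalue M b \<Longrightarrow> b \<le> d 0" using a_max unfolding d_def by simp
      show "d j \<le> d i" if "0 < i" "i \<le> j" "j < Suc n" for i j
        using that eb' unfolding d_def sorted_eigenbasis_def by auto
    qed
    then show ?case by blast
  qed
  then show ?thesis using that by blast
qed

context
  fixes M :: "real mat" and n :: nat and u :: "nat \<Rightarrow> real vec" and d :: "nat \<Rightarrow> real"
  assumes M: "M \<in> carrier_mat n n" and eb: "sorted_eigenbasis M n u d"
begin

lemma sorted_eigenbasis_orthonormal: "orthonormal_basis n u"
  using eb unfolding sorted_eigenbasis_def by auto

lemma sorted_eigenbasis_eigenvector: "j < n \<Longrightarrow> M *\<^sub>v u j = d j \<cdot>\<^sub>v u j"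
  using eb unfolding sorted_eigenbasis_def by auto

lemma sorted_eigenbasis_antimono: "i \<le> j \<Longrightarrow> j < n \<Longrightarrow> d j \<le> d i"
  using eb unfolding sorted_eigenbasis_def by auto

lemma sorted_eigenbasis_diagonalizes:
  "M * basis_mat n u = basis_mat n u * mat n n (\<lambda>(i,j). if i = j then d i else 0)"
proof (rule eq_matI)
  fix i j assume "i < dim_row (basis_mat n u * mat n n (\<lambda>(i,j). if i = j then d i else 0))"
    and "j < dim_col (basis_mat n u * mat n n (\<lambda>(i,j). if i = j then d i else 0))"
  then have i: "i < n" and j: "j < n" by auto
  have "(M * basis_mat n u) $$ (i,j) = (M *\<^sub>v u j) $ i"
    using i j M col_basis_mat[OF sorted_eigenbasis_orthonormal j] by (simp add: mult_mat_vec_def)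
  also have "\<dots> = d j * u j $ i"
    using sorted_eigenbasis_eigenvector[OF j] orthonormal_basis_carrier[OF sorted_eigenbasis_orthonormal j] i by simp
  also have "\<dots> = (basis_mat n u * mat n n (\<lambda>(i,j). if i = j then d i else 0)) $$ (i,j)"
    using i j by (simp add: scalar_prod_def basis_mat_def row_def col_def if_distrib[of "\<lambda>x. _ * x"] cong: if_cong)
  finally show "(M * basis_mat n u) $$ (i,j) = (basis_mat n u * mat n n (\<lambda>(i,j). if i = j then d i else 0)) $$ (i,j)" .
qed (use M in auto)

lemma sorted_eigenbasis_mult_vec:
  assumes z: "z \<in> carrier_vec n"
  shows "M *\<^sub>v z = basis_mat n u *\<^sub>v vec n (\<lambda>j. d j * (u j \<bullet> z))"
proof -
  let ?U = "basis_mat n u" and ?D = "mat n n (\<lambda>(i,j). if i = j then d i else 0)"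
  let ?a = "vec n (\<lambda>j. u j \<bullet> z)"
  have "M *\<^sub>v z = M *\<^sub>v (?U *\<^sub>v ?a)"
    using basis_expansion[OF sorted_eigenbasis_orthonormal z] by (rule arg_cong)
  also have "\<dots> = (M * ?U) *\<^sub>v ?a"
    using assoc_mult_mat_vec[OF M basis_mat_carrier, of ?a] by simp
  also have "\<dots> = ?U *\<^sub>v (?D *\<^sub>v ?a)"
    unfolding sorted_eigenbasis_diagonalizes by (rule assoc_mult_mat_vec[of _ n n]) auto
  also have "?D *\<^sub>v ?a = vec n (\<lambda>j. d j * (u j \<bullet> z))"
    by (rule eq_vecI) (auto simp: scalar_prod_def row_def if_distrib[of "\<lambda>x. x * _"] cong: if_cong)
  finally show ?thesis .
qed

lemma sorted_eigenbasis_quadratic_form: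
  assumes z: "z \<in> carrier_vec n"
  shows "z \<bullet> (M *\<^sub>v z) = (\<Sum>j\<in>{0..<n}. d j * (u j \<bullet> z)\<^sup>2)"
proof -
  have "z \<bullet> (M *\<^sub>v z) = vec n (\<lambda>j. u j \<bullet> z) \<bullet> vec n (\<lambda>j. d j * (u j \<bullet> z))"
    using isometry_sprod[OF basis_mat_carrier transpose_basis_mat_mult[OF sorted_eigenbasis_orthonormal],
        of "vec n (\<lambda>j. u j \<bullet> z)" "vec n (\<lambda>j. d j * (u j \<bullet> z))"]
      basis_expansion[OF sorted_eigenbasis_orthonormal z] sorted_eigenbasis_mult_vec[OF z] by simp
  then show ?thesis by (simp add: scalar_prod_def power2_eq_square algebra_simps)
qed

lemma sorted_eigenbasis_shifted_norm:
  assumes z: "z \<in> carrier_vec n"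
  shows "(M *\<^sub>v z - c \<cdot>\<^sub>v z) \<bullet> (M *\<^sub>v z - c \<cdot>\<^sub>v z) = (\<Sum>j\<in>{0..<n}. (d j - c)\<^sup>2 * (u j \<bullet> z)\<^sup>2)"
proof -
  let ?U = "basis_mat n u" and ?b = "vec n (\<lambda>j. (d j - c) * (u j \<bullet> z))"
  have "M *\<^sub>v z - c \<cdot>\<^sub>v z = ?U *\<^sub>v vec n (\<lambda>j. d j * (u j \<bullet> z)) - ?U *\<^sub>v (c \<cdot>\<^sub>v vec n (\<lambda>j. u j \<bullet> z))"
    using sorted_eigenbasis_mult_vec[OF z] basis_expansion[OF sorted_eigenbasis_orthonormal z]
      mult_mat_vec[OF basis_mat_carrier vec_carrier, where k = c] by simp
  also have "\<dots> = ?U *\<^sub>v ?b"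
    by (subst mult_minus_distrib_mat_vec[OF basis_mat_carrier, symmetric])
      (auto intro!: arg_cong[of _ _ "\<lambda>v. ?U *\<^sub>v v"] eq_vecI simp: algebra_simps)
  finally have "(M *\<^sub>v z - c \<cdot>\<^sub>v z) \<bullet> (M *\<^sub>v z - c \<cdot>\<^sub>v z) = ?b \<bullet> ?b"
    using isometry_sprod[OF basis_mat_carrier transpose_basis_mat_mult[OF sorted_eigenbasis_orthonormal], of ?b ?b]
    by simp
  then show ?thesis by (simp add: scalar_prod_def power2_eq_square algebra_simps)
qed

lemma sorted_eigenbasis_norm_mult_vec:
  assumes z: "z \<in> carrier_vec n"
  shows "(M *\<^sub>v z) \<bullet> (M *\<^sub>v z) = (\<Sum>j\<in>{0..<n}. (d j)\<^sup>2 * (u j \<bullet> z)\<^sup>2)"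
proof -
  have "M *\<^sub>v z - 0 \<cdot>\<^sub>v z = M *\<^sub>v z" using M z by (intro eq_vecI) auto
  then show ?thesis using sorted_eigenbasis_shifted_norm[OF z, of 0] by simp
qed

lemma sorted_eigenbasis_char_poly: "char_poly M = (\<Prod>a \<leftarrow> map d [0..<n]. [:- a, 1:])"
proof -
  let ?U = "basis_mat n u" and ?D = "mat n n (\<lambda>(i,j). if i = j then d i else 0)"
  have onb: "orthonormal_basis n u" by (rule sorted_eigenbasis_orthonormal)
  have "M = M * (?U * transpose_mat ?U)" using basis_mat_mult_transpose[OF onb] M by simp
  also have "\<dots> = (M * ?U) * transpose_mat ?U" using M by (simp add: assoc_mult_mat[of _ n n _ n _ n])
  finally have "M = ?U * ?D * transpose_mat ?U" unfolding sorted_eigenbasis_diagonalizes .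
  then have "similar_mat_wit M ?D ?U (transpose_mat ?U)"
    unfolding similar_mat_wit_def Let_def using M basis_mat_mult_transpose[OF onb] transpose_basis_mat_mult[OF onb]
    by auto
  then have "char_poly M = char_poly ?D"
    by (intro char_poly_similar) (auto simp: similar_mat_def)
  also have "\<dots> = (\<Prod>a \<leftarrow> diag_mat ?D. [:- a, 1:])"
    by (rule char_poly_upper_triangular) (auto simp: upper_triangular_def)
  also have "diag_mat ?D = map d [0..<n]" unfolding diag_mat_def by simp
  finally show ?thesis .
qed

lemma sorted_eigenbasis_shifted_norm_le:
  assumes d_nonneg: "\<And>j. j < n \<Longrightarrow> 0 \<le> d j" and k: "k < n" and \<alpha>: "2 * \<alpha> \<le> d k"
    and w: "w \<in> carrier_vec n" and perp: "\<And>a. a < k \<Longrightarrow> u a \<bullet> w = 0"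
  shows "(M *\<^sub>v w - \<alpha> \<cdot>\<^sub>v w) \<bullet> (M *\<^sub>v w - \<alpha> \<cdot>\<^sub>v w) \<le> (d k - \<alpha>)\<^sup>2 * (w \<bullet> w)"
  unfolding sorted_eigenbasis_shifted_norm[OF w]
proof (rule sum_weighted_coords_le[OF sorted_eigenbasis_orthonormal w])
  fix j assume j: "j < n" and "u j \<bullet> w \<noteq> 0"
  then have "k \<le> j" using perp by (meson not_le)
  then have "d j \<le> d k" using sorted_eigenbasis_antimono[of k j] j by simp
  then have "\<bar>d j - \<alpha>\<bar> \<le> \<bar>d k - \<alpha>\<bar>" using d_nonneg[OF j] \<alpha> by linarith
  then show "(d j - \<alpha>)\<^sup>2 \<le> (d k - \<alpha>)\<^sup>2" by (simp add: abs_le_square_iff)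
qed

lemma sorted_eigenbasis_shifted_norm_ge:
  assumes k: "k < n" and \<alpha>: "\<alpha> \<le> d k" and z: "z \<in> carrier_vec n" and supp: "\<And>j. j < n \<Longrightarrow> k < j \<Longrightarrow> u j \<bullet> z = 0"
  shows "(d k - \<alpha>)\<^sup>2 * (z \<bullet> z) \<le> (M *\<^sub>v z - \<alpha> \<cdot>\<^sub>v z) \<bullet> (M *\<^sub>v z - \<alpha> \<cdot>\<^sub>v z)"
  unfolding sorted_eigenbasis_shifted_norm[OF z]
proof (rule sum_weighted_coords_ge[OF sorted_eigenbasis_orthonormal z])
  fix j assume j: "j < n" and "u j \<bullet> z \<noteq> 0"
  then have "j \<le> k" using supp by (meson not_le)
  then have "d k \<le> d j" using sorted_eigenbasis_antimono[OF _ k] by blast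
  then show "(d k - \<alpha>)\<^sup>2 \<le> (d j - \<alpha>)\<^sup>2" using \<alpha> by (simp add: power_mono)
qed

end

section \<open>Singular values\<close>

lemma proots_prod_linear_factors: "proots (\<Prod>a \<leftarrow> as. [:- a, 1:]) = mset (as :: real list)"
proof (induction as)
  case (Cons a as)
  have "(\<Prod>a \<leftarrow> as. [:- a, 1:]) \<noteq> 0"
    unfolding prod_list_zero_iff by auto
  then have "proots ([:- a, 1:] * (\<Prod>a \<leftarrow> as. [:- a, 1:])) = proots [:- a, 1:] + mset as"
    using proots_mult[of "[:- a, 1:]"] Cons.IH by simp
  then show ?case
    using proots_linear_factor[of "- a"] by (simp del: mult_pCons_left)
qed simp

lemma gram_quadratic_form:
  fixes X :: "real mat"
  assumes X: "X \<in> carrier_mat r c" and z: "z \<in> carrier_vec c"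
  shows "(X *\<^sub>v z) \<bullet> (X *\<^sub>v z) = z \<bullet> ((transpose_mat X * X) *\<^sub>v z)"
proof -
  have "(X *\<^sub>v z) \<bullet> (X *\<^sub>v z) = (transpose_mat X *\<^sub>v (X *\<^sub>v z)) \<bullet> z"
    using transpose_vec_mult_scalar[OF X z] X z by simp
  also have "transpose_mat X *\<^sub>v (X *\<^sub>v z) = (transpose_mat X * X) *\<^sub>v z"
    using assoc_mult_mat_vec[of "transpose_mat X" c r X c z] X z by simp
  moreover have "(transpose_mat X * X) *\<^sub>v z \<in> carrier_vec c"
    using X by (intro carrier_vecI) simp
  ultimately show ?thesis
    using comm_scalar_prod[OF z] by metis
qed

lemma gram_eigenvalues_nonneg:
  fixes X :: "real mat"
  assumes X: "X \<in> carrier_mat r c" and eb: "sorted_eigenbasis (transpose_mat X * X) c u d" and j: "j < c"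
  shows "0 \<le> d j"
proof -
  have G: "transpose_mat X * X \<in> carrier_mat c c" using X by simp
  note onb = sorted_eigenbasis_orthonormal[OF G eb]
  have uj: "u j \<in> carrier_vec c" using orthonormal_basis_carrier[OF onb j] .
  have "d j = u j \<bullet> (d j \<cdot>\<^sub>v u j)"
    using uj orthonormal_basis_sprod[OF onb j j] by simp
  also have "\<dots> = (X *\<^sub>v u j) \<bullet> (X *\<^sub>v u j)"
    using gram_quadratic_form[OF X uj] sorted_eigenbasis_eigenvector[OF G eb j] by simp
  finally show ?thesis using real_sprod_self_nonneg by simp
qed

lemma sing_vals_sorted_eigenbasis:
  fixes X :: "real mat"
  assumes X: "X \<in> carrier_mat r c" and eb: "sorted_eigenbasis (transpose_mat X * X) c u d"
  shows "sing_vals X = map (\<lambda>j. sqrt (d j)) [0..<c]"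
proof -
  have G: "transpose_mat X * X \<in> carrier_mat c c" using X by simp
  define L where "L = map (\<lambda>j. sqrt (d j)) [0..<c]"
  have "image_mset sqrt (proots (char_poly (transpose_mat X * X))) = mset L"
    unfolding sorted_eigenbasis_char_poly[OF G eb] proots_prod_linear_factors L_def
    by (simp add: multiset.map_comp o_def)
  then have sv: "sing_vals X = rev (sort L)" unfolding sing_vals_def by simp
  have "sorted (rev L)"
    unfolding sorted_iff_nth_mono
  proof (intro allI impI)
    fix i j assume ij: "i \<le> j" "j < length (rev L)"
    then have "d (c - 1 - i) \<le> d (c - 1 - j)"
      using sorted_eigenbasis_antimono[OF G eb] unfolding L_def by simp
    then show "rev L ! i \<le> rev L ! j" using ij unfolding L_def by (simp add: rev_nth)
  qed
  then have "sort L = rev L"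
    by (intro properties_for_sort) simp_all
  then show ?thesis unfolding sv L_def by simp
qed

lemma sigma_gram_sorted_eigenbasis:
  fixes X :: "real mat"
  assumes X: "X \<in> carrier_mat r c"
  obtains u d where "sorted_eigenbasis (transpose_mat X * X) c u d" "\<And>j. j < c \<Longrightarrow> 0 \<le> d j"
    "\<And>i. sigma X i = (if 1 \<le> i \<and> i \<le> c then sqrt (d (i - 1)) else 0)"
    "\<And>i. 1 \<le> i \<Longrightarrow> i \<le> c \<Longrightarrow> (sigma X i)\<^sup>2 = d (i - 1)"
proof -
  have G: "transpose_mat X * X \<in> carrier_mat c c" using X by simp
  have "transpose_mat (transpose_mat X * X) = transpose_mat X * X"
    using X by (simp add: transpose_mult[of _ c r _ c])
  then obtain u d where eb: "sorted_eigenbasis (transpose_mat X * X) c u d"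
    using symmetric_mat_sorted_eigenbasis[OF G] by blast
  have sg: "sigma X i = (if 1 \<le> i \<and> i \<le> c then sqrt (d (i - 1)) else 0)" for i
    unfolding sigma_def sing_vals_sorted_eigenbasis[OF X eb] by auto
  then have "(sigma X i)\<^sup>2 = d (i - 1)" if "1 \<le> i" "i \<le> c" for i
    using that gram_eigenvalues_nonneg[OF X eb, of "i - 1"] by simp
  then show ?thesis using that eb gram_eigenvalues_nonneg[OF X eb] sg by blast
qed

lemma sigma_nonneg: "0 \<le> sigma X i"
proof -
  have X: "X \<in> carrier_mat (dim_row X) (dim_col X)" by auto
  obtain u d where "\<And>j. j < dim_col X \<Longrightarrow> 0 \<le> d j"
    "\<And>i. sigma X i = (if 1 \<le> i \<and> i \<le> dim_col X then sqrt (d (i - 1)) else 0)"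
    by (rule sigma_gram_sorted_eigenbasis[OF X]) blast
  then show ?thesis by auto
qed

lemma gram_norm_ge_on_leading_span:
  fixes X :: "real mat"
  assumes X: "X \<in> carrier_mat r c" and eb: "sorted_eigenbasis (transpose_mat X * X) c u d"
    and k: "k < c" and z: "z \<in> carrier_vec c" and supp: "\<And>j. j < c \<Longrightarrow> k < j \<Longrightarrow> u j \<bullet> z = 0"
  shows "d k * (z \<bullet> z) \<le> (X *\<^sub>v z) \<bullet> (X *\<^sub>v z)"
    and "0 \<le> d k \<Longrightarrow> d k * ((X *\<^sub>v z) \<bullet> (X *\<^sub>v z)) \<le> (transpose_mat X *\<^sub>v (X *\<^sub>v z)) \<bullet> (transpose_mat X *\<^sub>v (X *\<^sub>v z))"
proof -
  have G: "transpose_mat X * X \<in> carrier_mat c c" using X by simp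
  have lead: "d k \<le> d j" if "j < c" "u j \<bullet> z \<noteq> 0" for j
    using that supp sorted_eigenbasis_antimono[OF G eb, of j k] k by (meson not_le)
  have norm_X: "(X *\<^sub>v z) \<bullet> (X *\<^sub>v z) = (\<Sum>j\<in>{0..<c}. d j * (u j \<bullet> z)\<^sup>2)"
    unfolding gram_quadratic_form[OF X z] sorted_eigenbasis_quadratic_form[OF G eb z] ..
  show "d k * (z \<bullet> z) \<le> (X *\<^sub>v z) \<bullet> (X *\<^sub>v z)"
    unfolding norm_X by (rule sum_weighted_coords_ge[OF sorted_eigenbasis_orthonormal[OF G eb] z lead])
  assume dk: "0 \<le> d k"
  have "d k * ((X *\<^sub>v z) \<bullet> (X *\<^sub>v z)) = (\<Sum>j\<in>{0..<c}. d k * (d j * (u j \<bullet> z)\<^sup>2))"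
    unfolding norm_X by (simp add: sum_distrib_left)
  also have "\<dots> \<le> (\<Sum>j\<in>{0..<c}. (d j)\<^sup>2 * (u j \<bullet> z)\<^sup>2)"
  proof (rule sum_mono)
    fix j assume "j \<in> {0..<c}"
    show "d k * (d j * (u j \<bullet> z)\<^sup>2) \<le> (d j)\<^sup>2 * (u j \<bullet> z)\<^sup>2"
    proof (cases "u j \<bullet> z = 0")
      case False
      then have "d k * d j \<le> d j * d j"
        using lead[of j] dk \<open>j \<in> {0..<c}\<close> by (intro mult_right_mono) auto
      then have "d k * d j * (u j \<bullet> z)\<^sup>2 \<le> d j * d j * (u j \<bullet> z)\<^sup>2"
        by (rule mult_right_mono) simp
      then show ?thesis by (simp add: power2_eq_square mult.assoc)
    qed simp
  qed
  also have "\<dots> = (transpose_mat X *\<^sub>v (X *\<^sub>v z)) \<bullet> (transpose_mat X *\<^sub>v (X *\<^sub>v z))"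
    using sorted_eigenbasis_norm_mult_vec[OF G eb z] assoc_mult_mat_vec[of "transpose_mat X" c r X c z] X z
    by simp
  finally show "d k * ((X *\<^sub>v z) \<bullet> (X *\<^sub>v z)) \<le> (transpose_mat X *\<^sub>v (X *\<^sub>v z)) \<bullet> (transpose_mat X *\<^sub>v (X *\<^sub>v z))" .
qed

text \<open>The two halves of the Courant-Fischer min-max characterization of the singular values.\<close>
lemma sigma_ge_if_subspace:
  fixes X V :: "real mat"
  assumes X: "X \<in> carrier_mat r c" and V: "V \<in> carrier_mat c i" and i: "1 \<le> i"
    and inj: "\<forall>y\<in>carrier_vec i. V *\<^sub>v y = 0\<^sub>v c \<longrightarrow> y = 0\<^sub>v i"
    and \<gamma>: "0 \<le> \<gamma>"
    and bound: "\<And>y. y \<in> carrier_vec i \<Longrightarrow> \<gamma>\<^sup>2 * ((V *\<^sub>v y) \<bullet> (V *\<^sub>v y)) \<le> (X *\<^sub>v (V *\<^sub>v y)) \<bullet> (X *\<^sub>v (V *\<^sub>v y))"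
  shows "\<gamma> \<le> sigma X i"
proof -
  have ic: "i \<le> c" using injective_mat_dim_le[OF V inj] .
  have G: "transpose_mat X * X \<in> carrier_mat c c" using X by simp
  obtain u d where eb: "sorted_eigenbasis (transpose_mat X * X) c u d"
    and sg: "\<And>i. sigma X i = (if 1 \<le> i \<and> i \<le> c then sqrt (d (i - 1)) else 0)"
    by (rule sigma_gram_sorted_eigenbasis[OF X]) blast
  note onb = sorted_eigenbasis_orthonormal[OF G eb]
  obtain y where y: "y \<in> carrier_vec i" and z0: "V *\<^sub>v y \<noteq> 0\<^sub>v c"
    and perp: "\<And>a. a < i - 1 \<Longrightarrow> u a \<bullet> (V *\<^sub>v y) = 0"
    using injective_mat_range_meets_orthogonal_complement[OF V inj, of "i - 1" u]
      orthonormal_basis_carrier[OF onb] ic i by auto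
  define z where "z = V *\<^sub>v y"
  have z: "z \<in> carrier_vec c" unfolding z_def using V y by simp
  have "\<gamma>\<^sup>2 * (z \<bullet> z) \<le> (X *\<^sub>v z) \<bullet> (X *\<^sub>v z)"
    unfolding z_def using bound[OF y] .
  also have "\<dots> = (\<Sum>j\<in>{0..<c}. d j * (u j \<bullet> z)\<^sup>2)"
    unfolding gram_quadratic_form[OF X z] sorted_eigenbasis_quadratic_form[OF G eb z] ..
  also have "\<dots> \<le> d (i - 1) * (z \<bullet> z)"
  proof (rule sum_weighted_coords_le[OF onb z])
    fix j assume "j < c" "u j \<bullet> z \<noteq> 0"
    then show "d j \<le> d (i - 1)"
      using perp sorted_eigenbasis_antimono[OF G eb, of "i - 1" j] unfolding z_def by fastforce
  qed
  finally have "\<gamma>\<^sup>2 \<le> d (i - 1)"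
    using real_sprod_self_pos[OF z] z0 unfolding z_def by (meson mult_le_cancel_right_pos)
  then show ?thesis using sg[of i] i ic real_le_rsqrt by simp
qed

lemma sigma_le_if_all_subspaces:
  fixes X :: "real mat"
  assumes X: "X \<in> carrier_mat r c" and i: "1 \<le> i" and \<gamma>: "0 \<le> \<gamma>"
    and bound: "\<And>V. V \<in> carrier_mat c i \<Longrightarrow> \<forall>y\<in>carrier_vec i. V *\<^sub>v y = 0\<^sub>v c \<longrightarrow> y = 0\<^sub>v i \<Longrightarrow>
        \<exists>y\<in>carrier_vec i. V *\<^sub>v y \<noteq> 0\<^sub>v c \<and> (X *\<^sub>v (V *\<^sub>v y)) \<bullet> (X *\<^sub>v (V *\<^sub>v y)) \<le> \<gamma>\<^sup>2 * ((V *\<^sub>v y) \<bullet> (V *\<^sub>v y))"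
  shows "sigma X i \<le> \<gamma>"
proof -
  have G: "transpose_mat X * X \<in> carrier_mat c c" using X by simp
  obtain u d where eb: "sorted_eigenbasis (transpose_mat X * X) c u d"
    and sg: "\<And>i. sigma X i = (if 1 \<le> i \<and> i \<le> c then sqrt (d (i - 1)) else 0)"
    by (rule sigma_gram_sorted_eigenbasis[OF X]) blast
  show ?thesis
  proof (cases "i \<le> c")
    case False
    then show ?thesis using sg[of i] \<gamma> by simp
  next
    case ic: True
    obtain V where V: "V \<in> carrier_mat c i" "\<forall>y\<in>carrier_vec i. V *\<^sub>v y = 0\<^sub>v c \<longrightarrow> y = 0\<^sub>v i"
      and coords: "\<And>y j. y \<in> carrier_vec i \<Longrightarrow> j < c \<Longrightarrow> u j \<bullet> (V *\<^sub>v y) = (if j < i then y $ j else 0)"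
      using leading_basis_vectors_mat[OF sorted_eigenbasis_orthonormal[OF G eb] ic] by blast
    obtain y where y: "y \<in> carrier_vec i" "V *\<^sub>v y \<noteq> 0\<^sub>v c"
      and yb: "(X *\<^sub>v (V *\<^sub>v y)) \<bullet> (X *\<^sub>v (V *\<^sub>v y)) \<le> \<gamma>\<^sup>2 * ((V *\<^sub>v y) \<bullet> (V *\<^sub>v y))"
      using bound[OF V] by blast
    have z: "V *\<^sub>v y \<in> carrier_vec c" using V y by simp
    have "d (i - 1) * ((V *\<^sub>v y) \<bullet> (V *\<^sub>v y)) \<le> (X *\<^sub>v (V *\<^sub>v y)) \<bullet> (X *\<^sub>v (V *\<^sub>v y))"
      by (rule gram_norm_ge_on_leading_span(1)[OF X eb _ z]) (use coords[OF y(1)] i ic in auto)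
    with yb have "d (i - 1) \<le> \<gamma>\<^sup>2"
      using real_sprod_self_pos[OF z y(2)] by (meson mult_le_cancel_right_pos order_trans)
    then show ?thesis using sg[of i] ic i \<gamma> real_sqrt_le_iff[of "d (i - 1)" "\<gamma>\<^sup>2"] by simp
  qed
qed

lemma sigma_le_sigma_transpose: "sigma X i \<le> sigma (transpose_mat X) i"
proof -
  define r c where "r = dim_row X" and "c = dim_col X"
  have X: "X \<in> carrier_mat r c" and G: "transpose_mat X * X \<in> carrier_mat c c"
    unfolding r_def c_def by auto
  obtain u d where eb: "sorted_eigenbasis (transpose_mat X * X) c u d"
    and d_nonneg: "\<And>j. j < c \<Longrightarrow> 0 \<le> d j"
    and sg: "\<And>i. sigma X i = (if 1 \<le> i \<and> i \<le> c then sqrt (d (i - 1)) else 0)"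
    by (rule sigma_gram_sorted_eigenbasis[OF X]) blast
  show ?thesis
  proof (cases "1 \<le> i \<and> i \<le> c \<and> 0 < d (i - 1)")
    case False
    then have "sigma X i = 0" using sg[of i] d_nonneg[of "i - 1"] by auto
    then show ?thesis using sigma_nonneg by simp
  next
    case True
    then have i: "1 \<le> i" and ic: "i \<le> c" and d_pos: "0 < d (i - 1)" by auto
    obtain V where V: "V \<in> carrier_mat c i" "\<forall>y\<in>carrier_vec i. V *\<^sub>v y = 0\<^sub>v c \<longrightarrow> y = 0\<^sub>v i"
      and coords: "\<And>y j. y \<in> carrier_vec i \<Longrightarrow> j < c \<Longrightarrow> u j \<bullet> (V *\<^sub>v y) = (if j < i then y $ j else 0)"
      using leading_basis_vectors_mat[OF sorted_eigenbasis_orthonormal[OF G eb] ic] by blast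
    have XV: "(X * V) *\<^sub>v y = X *\<^sub>v (V *\<^sub>v y)" if "y \<in> carrier_vec i" for y
      using assoc_mult_mat_vec[OF X V(1) that] .
    have supp: "u j \<bullet> (V *\<^sub>v y) = 0" if "y \<in> carrier_vec i" "j < c" "i - 1 < j" for y j
      using coords[OF that(1,2)] that(3) by simp
    \<comment> \<open>the image under X of the span of the top i eigenvectors of X^T X witnesses the bound for X^T\<close>
    have "sqrt (d (i - 1)) \<le> sigma (transpose_mat X) i"
    proof (rule sigma_ge_if_subspace[of _ c r "X * V"])
      show "transpose_mat X \<in> carrier_mat c r" "X * V \<in> carrier_mat r i" "1 \<le> i" "0 \<le> sqrt (d (i - 1))"
        using X V i d_pos by auto
      show "\<forall>y\<in>carrier_vec i. (X * V) *\<^sub>v y = 0\<^sub>v r \<longrightarrow> y = 0\<^sub>v i"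
      proof (intro ballI impI)
        fix y :: "real vec" assume y: "y \<in> carrier_vec i" and "(X * V) *\<^sub>v y = 0\<^sub>v r"
        moreover have "d (i - 1) * ((V *\<^sub>v y) \<bullet> (V *\<^sub>v y)) \<le> (X *\<^sub>v (V *\<^sub>v y)) \<bullet> (X *\<^sub>v (V *\<^sub>v y))"
          by (rule gram_norm_ge_on_leading_span(1)[OF X eb _ _ supp[OF y]]) (use i ic V y in auto)
        ultimately have "d (i - 1) * ((V *\<^sub>v y) \<bullet> (V *\<^sub>v y)) \<le> 0"
          using XV[OF y] by simp
        moreover have "V *\<^sub>v y \<in> carrier_vec c" using V y by simp
        ultimately have "V *\<^sub>v y = 0\<^sub>v c"
          using d_pos real_sprod_self_pos by (meson mult_pos_pos not_le)
        then show "y = 0\<^sub>v i" using V(2) y by blast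
      qed
      show "(sqrt (d (i - 1)))\<^sup>2 * (((X * V) *\<^sub>v y) \<bullet> ((X * V) *\<^sub>v y))
          \<le> (transpose_mat X *\<^sub>v ((X * V) *\<^sub>v y)) \<bullet> (transpose_mat X *\<^sub>v ((X * V) *\<^sub>v y))"
        if y: "y \<in> carrier_vec i" for y
        unfolding XV[OF y] using gram_norm_ge_on_leading_span(2)[OF X eb _ _ supp[OF y]] i ic V y d_pos by simp
    qed
    then show ?thesis using sg[of i] i ic by simp
  qed
qed

lemma sigma_transpose: "sigma (transpose_mat X) i = sigma X i"
  using sigma_le_sigma_transpose[of X i] sigma_le_sigma_transpose[of "transpose_mat X" i] by simp

lemma diagonal_mat_norm_ge:
  fixes S :: "real mat"
  assumes S: "S \<in> carrier_mat l l" "diagonal_mat S" and s: "0 \<le> s" "\<And>j. j < l \<Longrightarrow> s \<le> S $$ (j, j)"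
    and z: "z \<in> carrier_vec l"
  shows "s\<^sup>2 * (z \<bullet> z) \<le> (S *\<^sub>v z) \<bullet> (S *\<^sub>v z)"
proof -
  have Sz: "(S *\<^sub>v z) $ j = S $$ (j, j) * z $ j" if j: "j < l" for j
  proof -
    have "(S *\<^sub>v z) $ j = (\<Sum>k\<in>{0..<l}. S $$ (j, k) * z $ k)"
      using S z j by (simp add: mult_mat_vec_def scalar_prod_def)
    also have "\<dots> = (\<Sum>k\<in>{0..<l}. if k = j then S $$ (j, j) * z $ j else 0)"
      by (rule sum.cong[OF refl]) (use S j in \<open>auto simp: diagonal_mat_def\<close>)
    finally show ?thesis using j by simp
  qed
  have "s\<^sup>2 * (z \<bullet> z) = (\<Sum>j\<in>{0..<l}. s\<^sup>2 * (z $ j)\<^sup>2)"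
    using z by (simp add: scalar_prod_def sum_distrib_left power2_eq_square)
  also have "\<dots> \<le> (\<Sum>j\<in>{0..<l}. (S $$ (j, j) * z $ j)\<^sup>2)"
    by (rule sum_mono) (use s in \<open>auto simp: power_mult_distrib intro!: mult_right_mono power_mono\<close>)
  also have "\<dots> = (\<Sum>j\<in>{0..<l}. (S *\<^sub>v z) $ j * (S *\<^sub>v z) $ j)"
    by (rule sum.cong[OF refl]) (simp add: Sz power2_eq_square)
  also have "\<dots> = (S *\<^sub>v z) \<bullet> (S *\<^sub>v z)"
    using S unfolding scalar_prod_def by simp
  finally show ?thesis .
qed

lemma econ_svd_last_le_sigma:
  assumes svd: "econ_svd B Q' S W m l" and l: "0 < l"
  shows "S $$ (l - 1, l - 1) \<le> sigma B l"
proof -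
  from svd have Q': "Q' \<in> carrier_mat m l" "transpose_mat Q' * Q' = 1\<^sub>m l"
    and W: "W \<in> carrier_mat l l" "transpose_mat W * W = 1\<^sub>m l"
    and S: "S \<in> carrier_mat l l" "diagonal_mat S" and S_nonneg: "\<forall>i<l. 0 \<le> S $$ (i, i)"
    and S_antimono: "\<forall>i j. i \<le> j \<longrightarrow> j < l \<longrightarrow> S $$ (j, j) \<le> S $$ (i, i)"
    and B: "B = Q' * S * transpose_mat W"
    unfolding econ_svd_def orthonormal_cols_def by auto
  let ?s = "S $$ (l - 1, l - 1)"
  have WT: "transpose_mat W \<in> carrier_mat l l" "transpose_mat (transpose_mat W) * transpose_mat W = 1\<^sub>m l"
    using W mat_mult_left_right_inverse[of "transpose_mat W" l W] by auto
  show ?thesis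
  proof (rule sigma_ge_if_subspace[of B m l "1\<^sub>m l" l])
    show "B \<in> carrier_mat m l"
      unfolding B using Q' S W by (intro mult_carrier_mat[of _ m l]) auto
    show "1\<^sub>m l \<in> carrier_mat l l" "1 \<le> l" "0 \<le> ?s"
      using l S_nonneg by auto
    show "\<forall>y\<in>carrier_vec l. 1\<^sub>m l *\<^sub>v y = 0\<^sub>v l \<longrightarrow> y = (0\<^sub>v l :: real vec)"
      by simp
    fix y :: "real vec" assume y: "y \<in> carrier_vec l"
    define z where "z = transpose_mat W *\<^sub>v y"
    have z: "z \<in> carrier_vec l" unfolding z_def using W y by simp
    have "B *\<^sub>v y = (Q' * S) *\<^sub>v z"
      unfolding B z_def by (rule assoc_mult_mat_vec[of _ m l _ l]) (use Q' S W y in auto)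
    also have "\<dots> = Q' *\<^sub>v (S *\<^sub>v z)"
      by (rule assoc_mult_mat_vec[of _ m l _ l]) (use Q' S z in auto)
    finally have "(B *\<^sub>v y) \<bullet> (B *\<^sub>v y) = (S *\<^sub>v z) \<bullet> (S *\<^sub>v z)"
      using isometry_sprod[OF Q'] S z by simp
    moreover have "y \<bullet> y = z \<bullet> z"
      unfolding z_def using isometry_sprod[OF WT y y] by simp
    moreover have "?s\<^sup>2 * (z \<bullet> z) \<le> (S *\<^sub>v z) \<bullet> (S *\<^sub>v z)"
      using diagonal_mat_norm_ge[OF S] S_nonneg S_antimono l z by simp
    ultimately show "?s\<^sup>2 * ((1\<^sub>m l *\<^sub>v y) \<bullet> (1\<^sub>m l *\<^sub>v y)) \<le> (B *\<^sub>v (1\<^sub>m l *\<^sub>v y)) \<bullet> (B *\<^sub>v (1\<^sub>m l *\<^sub>v y))"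
      using y by simp
  qed
qed

section \<open>The shifted subspace iteration\<close>

lemma smult_mat_mult_vec:
  fixes Q :: "'a :: comm_semiring_0 mat"
  assumes "Q \<in> carrier_mat m l" "p \<in> carrier_vec l"
  shows "(c \<cdot>\<^sub>m Q) *\<^sub>v p = c \<cdot>\<^sub>v (Q *\<^sub>v p)"
  using assms by (intro eq_vecI) (auto simp: mult_mat_vec_def scalar_prod_def sum_distrib_left algebra_simps)

lemma shifted_gram_mult_vec:
  fixes A Q :: "real mat"
  assumes A: "A \<in> carrier_mat m n" and Q: "Q \<in> carrier_mat m l" and p: "p \<in> carrier_vec l"
  shows "(A * transpose_mat A * Q - \<alpha> \<cdot>\<^sub>m Q) *\<^sub>v p = (A * transpose_mat A) *\<^sub>v (Q *\<^sub>v p) - \<alpha> \<cdot>\<^sub>v (Q *\<^sub>v p)"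
proof -
  have G: "A * transpose_mat A \<in> carrier_mat m m" using A by simp
  have "(A * transpose_mat A * Q - \<alpha> \<cdot>\<^sub>m Q) *\<^sub>v p = (A * transpose_mat A * Q) *\<^sub>v p - (\<alpha> \<cdot>\<^sub>m Q) *\<^sub>v p"
    by (rule minus_mult_distrib_mat_vec[of _ m l]) (use G Q p in auto)
  then show ?thesis
    using assoc_mult_mat_vec[OF G Q p] smult_mat_mult_vec[OF Q p] by simp
qed

lemma transpose_mult_shifted_gram_mult_vec:
  fixes A Q :: "real mat"
  assumes A: "A \<in> carrier_mat m n" and Q: "Q \<in> carrier_mat m l" "transpose_mat Q * Q = 1\<^sub>m l"
    and z: "z \<in> carrier_vec l"
  defines "Y \<equiv> transpose_mat A * Q"
  shows "transpose_mat Q *\<^sub>v ((A * transpose_mat A * Q - \<alpha> \<cdot>\<^sub>m Q) *\<^sub>v z) = (transpose_mat Y * Y) *\<^sub>v z - \<alpha> \<cdot>\<^sub>v z"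
proof -
  let ?G = "A * transpose_mat A"
  have Y: "Y \<in> carrier_mat n l" unfolding Y_def using A Q by simp
  have Qz: "Q *\<^sub>v z \<in> carrier_vec m" using Q z by simp
  have Yz: "Y *\<^sub>v z = transpose_mat A *\<^sub>v (Q *\<^sub>v z)"
    unfolding Y_def by (rule assoc_mult_mat_vec[of _ n m]) (use A Q z in auto)
  have YT: "transpose_mat Y = transpose_mat Q * A"
    unfolding Y_def using transpose_mult[of "transpose_mat A" n m Q l] A Q by simp
  have "(transpose_mat Y * Y) *\<^sub>v z = transpose_mat Y *\<^sub>v (Y *\<^sub>v z)"
    by (rule assoc_mult_mat_vec[of _ l n]) (use Y z in auto)
  also have "\<dots> = (transpose_mat Q * A) *\<^sub>v (transpose_mat A *\<^sub>v (Q *\<^sub>v z))"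
    unfolding Yz YT ..
  also have "\<dots> = transpose_mat Q *\<^sub>v (A *\<^sub>v (transpose_mat A *\<^sub>v (Q *\<^sub>v z)))"
    by (rule assoc_mult_mat_vec[of _ l m _ n]) (use A Q Qz in auto)
  also have "A *\<^sub>v (transpose_mat A *\<^sub>v (Q *\<^sub>v z)) = ?G *\<^sub>v (Q *\<^sub>v z)"
    by (rule assoc_mult_mat_vec[of _ m n _ m, symmetric]) (use A Qz in auto)
  finally have "transpose_mat Q *\<^sub>v (?G *\<^sub>v (Q *\<^sub>v z)) = (transpose_mat Y * Y) *\<^sub>v z" ..
  moreover have "transpose_mat Q *\<^sub>v (\<alpha> \<cdot>\<^sub>v (Q *\<^sub>v z)) = \<alpha> \<cdot>\<^sub>v z"
    using mult_mat_vec[of "transpose_mat Q" l m "Q *\<^sub>v z" \<alpha>] assoc_mult_mat_vec[of "transpose_mat Q" l m Q l z] Q z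
    by simp
  moreover have "transpose_mat Q *\<^sub>v (?G *\<^sub>v (Q *\<^sub>v z) - \<alpha> \<cdot>\<^sub>v (Q *\<^sub>v z))
      = transpose_mat Q *\<^sub>v (?G *\<^sub>v (Q *\<^sub>v z)) - transpose_mat Q *\<^sub>v (\<alpha> \<cdot>\<^sub>v (Q *\<^sub>v z))"
    by (rule mult_minus_distrib_mat_vec[of _ l m]) (use A Q Qz in auto)
  ultimately show ?thesis
    using shifted_gram_mult_vec[OF A Q(1) z] by simp
qed

lemma shifted_gram_norm_le_on_subspace:
  fixes A Q V :: "real mat"
  assumes A: "A \<in> carrier_mat m n" and Q: "Q \<in> carrier_mat m l" "transpose_mat Q * Q = 1\<^sub>m l"
    and eb: "sorted_eigenbasis (A * transpose_mat A) m u d" and d_nonneg: "\<And>j. j < m \<Longrightarrow> 0 \<le> d j"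
    and i: "1 \<le> i" "i \<le> l" and d_ge: "2 * \<alpha> \<le> d (i - 1)"
    and V: "V \<in> carrier_mat l i" and inj: "\<forall>y\<in>carrier_vec i. V *\<^sub>v y = 0\<^sub>v l \<longrightarrow> y = 0\<^sub>v i"
  obtains y where "y \<in> carrier_vec i" "V *\<^sub>v y \<noteq> 0\<^sub>v l"
    "((A * transpose_mat A * Q - \<alpha> \<cdot>\<^sub>m Q) *\<^sub>v (V *\<^sub>v y)) \<bullet> ((A * transpose_mat A * Q - \<alpha> \<cdot>\<^sub>m Q) *\<^sub>v (V *\<^sub>v y))
       \<le> (d (i - 1) - \<alpha>)\<^sup>2 * ((V *\<^sub>v y) \<bullet> (V *\<^sub>v y))"
proof -
  let ?G = "A * transpose_mat A"
  have G: "?G \<in> carrier_mat m m" using A by simp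
  have lm: "l \<le> m" using isometry_dim_le[OF Q] .
  have QV: "Q * V \<in> carrier_mat m i" using Q V by simp
  have QV_apply: "(Q * V) *\<^sub>v y = Q *\<^sub>v (V *\<^sub>v y)" if "y \<in> carrier_vec i" for y
    using assoc_mult_mat_vec[OF Q(1) V that] .
  have "\<forall>y\<in>carrier_vec i. (Q * V) *\<^sub>v y = 0\<^sub>v m \<longrightarrow> y = 0\<^sub>v i"
    using inj isometry_mult_vec_eq_0_iff[OF Q] QV_apply V by auto
  then obtain y where y: "y \<in> carrier_vec i" and w0: "(Q * V) *\<^sub>v y \<noteq> 0\<^sub>v m"
    and perp: "\<And>a. a < i - 1 \<Longrightarrow> u a \<bullet> ((Q * V) *\<^sub>v y) = 0"
    using injective_mat_range_meets_orthogonal_complement[OF QV _ _, of "i - 1" u]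
      orthonormal_basis_carrier[OF sorted_eigenbasis_orthonormal[OF G eb]] i lm by auto
  define w where "w = Q *\<^sub>v (V *\<^sub>v y)"
  have Vy: "V *\<^sub>v y \<in> carrier_vec l" using V y by simp
  have w: "w \<in> carrier_vec m" unfolding w_def using Q Vy by simp
  have "((?G * Q - \<alpha> \<cdot>\<^sub>m Q) *\<^sub>v (V *\<^sub>v y)) \<bullet> ((?G * Q - \<alpha> \<cdot>\<^sub>m Q) *\<^sub>v (V *\<^sub>v y))
      = (?G *\<^sub>v w - \<alpha> \<cdot>\<^sub>v w) \<bullet> (?G *\<^sub>v w - \<alpha> \<cdot>\<^sub>v w)"
    unfolding w_def shifted_gram_mult_vec[OF A Q(1) Vy] ..
  also have "\<dots> \<le> (d (i - 1) - \<alpha>)\<^sup>2 * (w \<bullet> w)"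
    by (rule sorted_eigenbasis_shifted_norm_le[OF G eb d_nonneg _ d_ge w])
      (use perp QV_apply[OF y] i lm in \<open>auto simp: w_def\<close>)
  also have "w \<bullet> w = (V *\<^sub>v y) \<bullet> (V *\<^sub>v y)"
    unfolding w_def using isometry_sprod[OF Q Vy Vy] .
  finally show ?thesis
    using that y w0 QV_apply[OF y] isometry_mult_vec_eq_0_iff[OF Q Vy] by auto
qed

lemma sigma_shifted_gram_le:
  fixes A Q :: "real mat"
  assumes A: "A \<in> carrier_mat m n" and Q: "Q \<in> carrier_mat m l" "transpose_mat Q * Q = 1\<^sub>m l"
    and i: "1 \<le> i" "i \<le> l" and \<alpha>: "0 \<le> \<alpha>" "2 * \<alpha> \<le> (sigma A l)\<^sup>2"
  shows "sigma (A * transpose_mat A * Q - \<alpha> \<cdot>\<^sub>m Q) i \<le> (sigma A i)\<^sup>2 - \<alpha>"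
proof -
  have lm: "l \<le> m" using isometry_dim_le[OF Q] .
  have G: "A * transpose_mat A \<in> carrier_mat m m" and AT: "transpose_mat A \<in> carrier_mat n m"
    using A by auto
  have B: "A * transpose_mat A * Q - \<alpha> \<cdot>\<^sub>m Q \<in> carrier_mat m l" using A Q by auto
  obtain u d where eb: "sorted_eigenbasis (A * transpose_mat A) m u d" and d_nonneg: "\<And>j. j < m \<Longrightarrow> 0 \<le> d j"
    and sq: "\<And>j. 1 \<le> j \<Longrightarrow> j \<le> m \<Longrightarrow> (sigma (transpose_mat A) j)\<^sup>2 = d (j - 1)"
    by (rule sigma_gram_sorted_eigenbasis[OF AT]) auto
  have "d (l - 1) \<le> d (i - 1)"
    by (rule sorted_eigenbasis_antimono[OF G eb]) (use i lm in auto)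
  then have d_ge: "2 * \<alpha> \<le> d (i - 1)"
    using \<alpha>(2) sq[of l] i lm sigma_transpose by simp
  have "sigma (A * transpose_mat A * Q - \<alpha> \<cdot>\<^sub>m Q) i \<le> d (i - 1) - \<alpha>"
  proof (rule sigma_le_if_all_subspaces[OF B i(1)])
    show "0 \<le> d (i - 1) - \<alpha>" using d_ge \<alpha>(1) by simp
    fix V :: "real mat"
    assume V: "V \<in> carrier_mat l i" and inj: "\<forall>y\<in>carrier_vec i. V *\<^sub>v y = 0\<^sub>v l \<longrightarrow> y = 0\<^sub>v i"
    obtain y where "y \<in> carrier_vec i" "V *\<^sub>v y \<noteq> 0\<^sub>v l"
      "((A * transpose_mat A * Q - \<alpha> \<cdot>\<^sub>m Q) *\<^sub>v (V *\<^sub>v y)) \<bullet> ((A * transpose_mat A * Q - \<alpha> \<cdot>\<^sub>m Q) *\<^sub>v (V *\<^sub>v y))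
         \<le> (d (i - 1) - \<alpha>)\<^sup>2 * ((V *\<^sub>v y) \<bullet> (V *\<^sub>v y))"
      by (rule shifted_gram_norm_le_on_subspace[OF A Q eb d_nonneg i d_ge V inj])
    then show "\<exists>y\<in>carrier_vec i. V *\<^sub>v y \<noteq> 0\<^sub>v l \<and>
        ((A * transpose_mat A * Q - \<alpha> \<cdot>\<^sub>m Q) *\<^sub>v (V *\<^sub>v y)) \<bullet> ((A * transpose_mat A * Q - \<alpha> \<cdot>\<^sub>m Q) *\<^sub>v (V *\<^sub>v y))
          \<le> (d (i - 1) - \<alpha>)\<^sup>2 * ((V *\<^sub>v y) \<bullet> (V *\<^sub>v y))"
      by blast
  qed
  then show ?thesis using sq[of i] i lm sigma_transpose by simp
qed

lemma shifted_gram_norm_ge_on_leading_span: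
  fixes A Q :: "real mat"
  assumes A: "A \<in> carrier_mat m n" and Q: "Q \<in> carrier_mat m l" "transpose_mat Q * Q = 1\<^sub>m l"
    and eb: "sorted_eigenbasis (transpose_mat (transpose_mat A * Q) * (transpose_mat A * Q)) l u \<mu>"
    and k: "k < l" and \<alpha>: "\<alpha> \<le> \<mu> k" and z: "z \<in> carrier_vec l"
    and supp: "\<And>j. j < l \<Longrightarrow> k < j \<Longrightarrow> u j \<bullet> z = 0"
  shows "(\<mu> k - \<alpha>)\<^sup>2 * (z \<bullet> z)
    \<le> ((A * transpose_mat A * Q - \<alpha> \<cdot>\<^sub>m Q) *\<^sub>v z) \<bullet> ((A * transpose_mat A * Q - \<alpha> \<cdot>\<^sub>m Q) *\<^sub>v z)"
proof -
  let ?B = "A * transpose_mat A * Q - \<alpha> \<cdot>\<^sub>m Q" and ?C = "transpose_mat (transpose_mat A * Q) * (transpose_mat A * Q)"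
  have C: "?C \<in> carrier_mat l l" and B: "?B \<in> carrier_mat m l" using A Q by auto
  have "(\<mu> k - \<alpha>)\<^sup>2 * (z \<bullet> z) \<le> (?C *\<^sub>v z - \<alpha> \<cdot>\<^sub>v z) \<bullet> (?C *\<^sub>v z - \<alpha> \<cdot>\<^sub>v z)"
    using sorted_eigenbasis_shifted_norm_ge[OF C eb k \<alpha> z supp] .
  also have "\<dots> = (transpose_mat Q *\<^sub>v (?B *\<^sub>v z)) \<bullet> (transpose_mat Q *\<^sub>v (?B *\<^sub>v z))"
    unfolding transpose_mult_shifted_gram_mult_vec[OF A Q z] ..
  also have "\<dots> \<le> (?B *\<^sub>v z) \<bullet> (?B *\<^sub>v z)"
    by (rule transpose_isometry_norm_le[OF Q mult_mat_vec_carrier[OF B z]])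
  finally show ?thesis .
qed

lemma sigma_transpose_mult_sq_le:
  fixes A Q :: "real mat"
  assumes A: "A \<in> carrier_mat m n" and Q: "Q \<in> carrier_mat m l" "transpose_mat Q * Q = 1\<^sub>m l"
    and i: "1 \<le> i" "i \<le> l"
  shows "(sigma (transpose_mat Q * A) i)\<^sup>2 \<le> sigma (A * transpose_mat A * Q - \<alpha> \<cdot>\<^sub>m Q) i + \<alpha>"
proof -
  let ?B = "A * transpose_mat A * Q - \<alpha> \<cdot>\<^sub>m Q"
  define Y where "Y = transpose_mat A * Q"
  have Y: "Y \<in> carrier_mat n l" and C: "transpose_mat Y * Y \<in> carrier_mat l l"
    unfolding Y_def using A Q by auto
  have B: "?B \<in> carrier_mat m l" using A Q by auto
  have "transpose_mat Y = transpose_mat Q * A"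
    unfolding Y_def using transpose_mult[of "transpose_mat A" n m Q l] A Q by simp
  then have sigma_Y: "sigma (transpose_mat Q * A) i = sigma Y i"
    using sigma_transpose[of Y i] by simp
  obtain u \<mu> where eb: "sorted_eigenbasis (transpose_mat Y * Y) l u \<mu>"
    and sq: "\<And>j. 1 \<le> j \<Longrightarrow> j \<le> l \<Longrightarrow> (sigma Y j)\<^sup>2 = \<mu> (j - 1)"
    by (rule sigma_gram_sorted_eigenbasis[OF Y]) auto
  show ?thesis
  proof (cases "\<mu> (i - 1) \<le> \<alpha>")
    case True
    then show ?thesis using sigma_Y sq[OF i] sigma_nonneg[of ?B i] by simp
  next
    case False
    obtain V where V: "V \<in> carrier_mat l i" "\<forall>y\<in>carrier_vec i. V *\<^sub>v y = 0\<^sub>v l \<longrightarrow> y = 0\<^sub>v i"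
      and coords: "\<And>y j. y \<in> carrier_vec i \<Longrightarrow> j < l \<Longrightarrow> u j \<bullet> (V *\<^sub>v y) = (if j < i then y $ j else 0)"
      using leading_basis_vectors_mat[OF sorted_eigenbasis_orthonormal[OF C eb] i(2)] by blast
    have "\<mu> (i - 1) - \<alpha> \<le> sigma ?B i"
    proof (rule sigma_ge_if_subspace[OF B V(1) i(1) V(2)])
      show "0 \<le> \<mu> (i - 1) - \<alpha>" using False by simp
      show "(\<mu> (i - 1) - \<alpha>)\<^sup>2 * ((V *\<^sub>v y) \<bullet> (V *\<^sub>v y)) \<le> (?B *\<^sub>v (V *\<^sub>v y)) \<bullet> (?B *\<^sub>v (V *\<^sub>v y))"
        if y: "y \<in> carrier_vec i" for y
        by (rule shifted_gram_norm_ge_on_leading_span[OF A Q eb[unfolded Y_def]])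
          (use False i V y coords[OF y] in auto)
    qed
    then show ?thesis using sigma_Y sq[OF i] by simp
  qed
qed

lemma alg2_step_shift_invariant:
  assumes A: "A \<in> carrier_mat m n" and l: "0 < l"
    and step: "alg2_step A m l Q \<alpha> Q' \<alpha>'"
    and Q: "orthonormal_cols Q m l" and \<alpha>: "0 \<le> \<alpha>" "2 * \<alpha> \<le> (sigma A l)\<^sup>2"
  shows "orthonormal_cols Q' m l \<and> 0 \<le> \<alpha>' \<and> 2 * \<alpha>' \<le> (sigma A l)\<^sup>2"
proof -
  obtain S W where svd: "econ_svd (A * transpose_mat A * Q - \<alpha> \<cdot>\<^sub>m Q) Q' S W m l"
    and \<alpha>': "\<alpha>' = (if S $$ (l - 1, l - 1) > \<alpha> then (S $$ (l - 1, l - 1) + \<alpha>) / 2 else \<alpha>)"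
    using step unfolding alg2_step_def by blast
  have Q': "orthonormal_cols Q' m l" and s_nonneg: "0 \<le> S $$ (l - 1, l - 1)"
    using svd l unfolding econ_svd_def by auto
  have "S $$ (l - 1, l - 1) \<le> sigma (A * transpose_mat A * Q - \<alpha> \<cdot>\<^sub>m Q) l"
    using econ_svd_last_le_sigma[OF svd l] .
  also have "\<dots> \<le> (sigma A l)\<^sup>2 - \<alpha>"
    using sigma_shifted_gram_le[OF A _ _ _ order.refl \<alpha>] Q l unfolding orthonormal_cols_def by simp
  finally show ?thesis using Q' s_nonneg \<alpha> unfolding \<alpha>' by auto
qed

theorem proposition3:
  fixes A :: "real mat" and m n k s p :: nat
    and \<Omega> :: "real mat" and Qs :: "nat \<Rightarrow> real mat" and \<alpha>s :: "nat \<Rightarrow> real"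
  defines "l \<equiv> k + s"
  assumes A: "A \<in> carrier_mat m n"
    and k: "1 \<le> k"
    and Omega: "\<Omega> \<in> carrier_mat n l"
    and Q0: "orthonormal_cols (Qs 0) m l" "col_space (Qs 0) = col_space (A * \<Omega>)"
    and alpha0: "\<alpha>s 0 = 0"
    and steps: "\<And>j. j < p \<Longrightarrow> alg2_step A m l (Qs j) (\<alpha>s j) (Qs (Suc j)) (\<alpha>s (Suc j))"
    and j: "j < p"
    and pos: "\<alpha>s j > 0"
    and i: "1 \<le> i" "i \<le> l"
  shows "sigma (transpose_mat (Qs j) * A) i
           \<le> sqrt (sigma (A * transpose_mat A * Qs j - \<alpha>s j \<cdot>\<^sub>m Qs j) i + \<alpha>s j)
       \<and> sqrt (sigma (A * transpose_mat A * Qs j - \<alpha>s j \<cdot>\<^sub>m Qs j) i + \<alpha>s j) \<le> sigma A i"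
proof -
  \<comment> \<open>the bounds hold for every nonnegative shift reached by the iteration\<close>
  have l: "0 < l" using k unfolding l_def by simp
  have "orthonormal_cols (Qs j') m l \<and> 0 \<le> \<alpha>s j' \<and> 2 * \<alpha>s j' \<le> (sigma A l)\<^sup>2" if "j' \<le> p" for j'
    using that
  proof (induction j')
    case (Suc j')
    then show ?case using alg2_step_shift_invariant[OF A l steps] by simp
  qed (use Q0(1) alpha0 in simp)
  then have Q: "Qs j \<in> carrier_mat m l" "transpose_mat (Qs j) * Qs j = 1\<^sub>m l"
    and \<alpha>: "0 \<le> \<alpha>s j" "2 * \<alpha>s j \<le> (sigma A l)\<^sup>2"
    using j unfolding orthonormal_cols_def by auto
  let ?B = "A * transpose_mat A * Qs j - \<alpha>s j \<cdot>\<^sub>m Qs j"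
  have "(sigma (transpose_mat (Qs j) * A) i)\<^sup>2 \<le> sigma ?B i + \<alpha>s j"
    using sigma_transpose_mult_sq_le[OF A Q i] .
  moreover have "sigma ?B i + \<alpha>s j \<le> (sigma A i)\<^sup>2"
    using sigma_shifted_gram_le[OF A Q i \<alpha>] by simp
  ultimately show ?thesis
    using sigma_nonneg[of A i] by (metis real_le_rsqrt real_sqrt_le_mono real_sqrt_abs abs_of_nonneg)
qed

end
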